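(* Let $i \in \mathbb{N}_0$. (i) Suppose that the mesh $\mathcal{T}_h$ satisfies the angle condition $\int_\Omega \nabla\varphi_{z}\cdot\nabla\varphi_{z'} \leq 0$ for all vertices $z \neq z'$. The approximations generated by the tangent plane scheme satisfy the discrete energy law \[ \mathcal{J}_h(\boldsymbol{m}_h^{i+1},\boldsymbol{v}_h^{i+1}) + \alpha k \|\boldsymbol{v}_h^{i+1}\|_h^2 + \frac{\tau k^2}{2} \|d_t \boldsymbol{v}_h^{i+1}\|_h^2 + \frac{k^2}{2} \|\nabla\boldsymbol{v}_h^{i+1}\|_{\boldsymbol{L}^2(\Omega)}^2 \leq \mathcal{J}_h(\boldsymbol{m}_h^i,\boldsymbol{v}_h^i). \] (ii) The approximations generated by the nonlinear angular momentum method satisfy the discrete energy law \[ \mathcal{J}_h(\boldsymbol{m}_h^{i+1},\boldsymbol{w}_h^{i+1}) + \alpha k \|d_t\boldsymbol{m}_h^{i+1}\|_h^2 = \mathcal{J}_h(\boldsymbol{m}_h^i,\boldsymbol{w}_h^i). \] (iii) The approximations generated by the linearized angular momentum method satisfy the discrete energy law \[ \mathcal{J}_h(\boldsymbol{m}_h^{i+1},\boldsymbol{w}_h^{i+1}) + \alpha k \|d_t\boldsymbol{m}_h^{i+1}\|_h^2 + k \big(\boldsymbol{m}_h^{i+1/2} \times \boldsymbol{r}_h^i, \mathcal{P}_h\boldsymbol{h}_{\mathrm{eff}}[\boldsymbol{m}_h^{i+1/2}] - \alpha \, d_t\boldsymbol{m}_h^{i+1}\big)_h = \mathcal{J}_h(\boldsymbol{m}_h^i,\boldsymbol{w}_h^i).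 \]
   Context: Setting: $\Omega\subset\mathbb{R}^d$ ($d=2,3$) is a bounded polytopal Lipschitz domain; $\alpha>0$, $\tau>0$ are constants (Gilbert damping and angular momentum relaxation time) of the inertial Landau–Lifshitz–Gilbert equation $\partial_t\boldsymbol{m} = -\boldsymbol{m}\times(\boldsymbol{h}_{\mathrm{eff}}[\boldsymbol{m}] - \alpha\partial_t\boldsymbol{m} - \tau\partial_{tt}\boldsymbol{m})$. The energy is $\mathcal{E}[\boldsymbol{m}] = \frac12\|\nabla\boldsymbol{m}\|_{\boldsymbol{L}^2(\Omega)}^2$ and the effective field is defined by $-\langle\boldsymbol{h}_{\mathrm{eff}}[\boldsymbol{m}],\boldsymbol{\phi}\rangle = (\nabla\boldsymbol{m},\nabla\boldsymbol{\phi})$ (an element of the dual of $\boldsymbol{H}^1(\Omega)$). Discretization: $k>0$ is a uniform time-step, $d_t\phi^{i+1} := (\phi^{i+1}-\phi^i)/k$, $\phi^{i+1/2} := (\phi^{i+1}+\phi^i)/2$. $\mathcal{T}_h$ is a shape-regular simplicial mesh of $\Omega$ with vertex set $\mathcal{N}_h$, $\mathcal{S}^1(\mathcal{T}_h)$ the space of continuous piecewise affine functions with nodal hat basis $\{\varphi_z\}_{z\in\mathcal{N}_h}$, $\mathcal{I}_h$ the (vector-valued) nodal interpolant. The mass-lumped product is $(\boldsymbol{\psi},\boldsymbol{\phi})_h = \int_\Omega \mathcal{I}_h[\boldsymbol{\psi}\cdot\boldsymbol{\phi}]$ with induced norm $\|\cdot\|_h$. The map $\mathcal{P}_h$ from the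 dual of $\boldsymbol{H}^1(\Omega)$ to $\mathcal{S}^1(\mathcal{T}_h)^3$ is defined by $(\mathcal{P}_h\boldsymbol{u},\boldsymbol{\phi}_h)_h = \langle\boldsymbol{u},\boldsymbol{\phi}_h\rangle$ for all $\boldsymbol{\phi}_h\in\mathcal{S}^1(\mathcal{T}_h)^3$. Let $\mathcal{M}_h := \{\boldsymbol{\phi}_h\in\mathcal{S}^1(\mathcal{T}_h)^3 : |\boldsymbol{\phi}_h(z)|=1 \ \forall z\in\mathcal{N}_h\}$ and, for $\boldsymbol{\psi}_h\in\mathcal{S}^1(\mathcal{T}_h)^3$, $\mathcal{K}_h[\boldsymbol{\psi}_h] := \{\boldsymbol{\phi}_h\in\mathcal{S}^1(\mathcal{T}_h)^3 : \boldsymbol{\psi}_h(z)\cdot\boldsymbol{\phi}_h(z)=0 \ \forall z\in\mathcal{N}_h\}$. The discrete total energy is $\mathcal{J}_h(\boldsymbol{m}_h,\boldsymbol{u}_h) = \mathcal{E}[\boldsymbol{m}_h] + \frac{\tau}{2}\|\boldsymbol{u}_h\|_h^2$. All algorithms start from $\boldsymbol{m}_h^0\in\mathcal{M}_h$, $\boldsymbol{v}_h^0\in\mathcal{K}_h[\boldsymbol{m}_h^0]$. Tangent plane scheme: for each $i$, compute $\boldsymbol{v}_h^{i+1}\in\mathcal{K}_h[\boldsymbol{m}_h^i]$ such that for all $\boldsymbol{\phi}_h\in\mathcal{K}_h[\boldsymbol{m}_h^i]$: $\tau(d_t\boldsymbol{v}_h^{i+1},\boldsymbol{\phi}_h)_h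 + \alpha(\boldsymbol{v}_h^{i+1},\boldsymbol{\phi}_h)_h + (\boldsymbol{m}_h^i\times\boldsymbol{v}_h^{i+1},\boldsymbol{\phi}_h)_h - k(\mathcal{P}_h\boldsymbol{h}_{\mathrm{eff}}[\boldsymbol{v}_h^{i+1}],\boldsymbol{\phi}_h)_h = (\mathcal{P}_h\boldsymbol{h}_{\mathrm{eff}}[\boldsymbol{m}_h^i],\boldsymbol{\phi}_h)_h$; then set $\boldsymbol{m}_h^{i+1} = \mathcal{I}_h[(\boldsymbol{m}_h^i + k\boldsymbol{v}_h^{i+1})/|\boldsymbol{m}_h^i + k\boldsymbol{v}_h^{i+1}|]$. Nonlinear angular momentum method: set $\boldsymbol{w}_h^0 = \mathcal{I}_h[\boldsymbol{m}_h^0\times\boldsymbol{v}_h^0]$; for each $i$, find $(\boldsymbol{m}_h^{i+1},\boldsymbol{w}_h^{i+1})\in\mathcal{M}_h\times\mathcal{K}_h[\boldsymbol{m}_h^{i+1}]$ such that for all $\boldsymbol{\phi}_h,\boldsymbol{\psi}_h\in\mathcal{S}^1(\mathcal{T}_h)^3$: $(d_t\boldsymbol{m}_h^{i+1},\boldsymbol{\phi}_h)_h = -(\boldsymbol{m}_h^{i+1/2}\times\boldsymbol{w}_h^{i+1/2},\boldsymbol{\phi}_h)_h$ and $\tau(d_t\boldsymbol{w}_h^{i+1},\boldsymbol{\psi}_h)_h = (\boldsymbol{m}_h^{i+1/2}\times\mathcal{P}_h\boldsymbol{h}_{\mathrm{eff}}[\boldsymbol{m}_h^{i+1/2}],\boldsymbol{\psi}_h)_h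 - \alpha(\boldsymbol{m}_h^{i+1/2}\times d_t\boldsymbol{m}_h^{i+1},\boldsymbol{\psi}_h)_h - (\boldsymbol{m}_h^{i+1/2}\times\boldsymbol{w}_h^{i+1/2},\boldsymbol{\psi}_h)_h$. Linearized angular momentum method: same initialization of $\boldsymbol{w}_h^0$; for each $i$, set $\boldsymbol{u}_h^{i,0}=\boldsymbol{m}_h^i$, $\boldsymbol{z}_h^{i,0}=\boldsymbol{w}_h^i$ and for $\ell\in\mathbb{N}_0$ compute $\boldsymbol{u}_h^{i,\ell+1}\in\mathcal{S}^1(\mathcal{T}_h)^3$ with $2(\boldsymbol{u}_h^{i,\ell+1},\boldsymbol{\phi}_h)_h + k(\boldsymbol{u}_h^{i,\ell+1}\times\boldsymbol{z}_h^{i,\ell},\boldsymbol{\phi}_h)_h = 2(\boldsymbol{m}_h^i,\boldsymbol{\phi}_h)_h$ for all $\boldsymbol{\phi}_h$, then $\boldsymbol{z}_h^{i,\ell+1}\in\mathcal{S}^1(\mathcal{T}_h)^3$ with $2\tau(\boldsymbol{z}_h^{i,\ell+1},\boldsymbol{\psi}_h)_h + k(\boldsymbol{u}_h^{i,\ell+1}\times\boldsymbol{z}_h^{i,\ell+1},\boldsymbol{\psi}_h)_h = k(\boldsymbol{u}_h^{i,\ell+1}\times\mathcal{P}_h\boldsymbol{h}_{\mathrm{eff}}[\boldsymbol{u}_h^{i,\ell+1}],\boldsymbol{\psi}_h)_h + 2\alpha(\boldsymbol{u}_h^{i,\ell+1}\times\boldsymbol{m}_h^i,\boldsymbol{\psi}_h)_h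 + 2\tau(\boldsymbol{w}_h^i,\boldsymbol{\psi}_h)_h$ for all $\boldsymbol{\psi}_h$, until $\|\boldsymbol{u}_h^{i,\ell+1}-\boldsymbol{u}_h^{i,\ell}\|_h + \|\boldsymbol{z}_h^{i,\ell+1}-\boldsymbol{z}_h^{i,\ell}\|_h\le\varepsilon$; with $\ell_i$ the first index meeting this, set $\boldsymbol{m}_h^{i+1} = 2\boldsymbol{u}_h^{i,\ell_i+1}-\boldsymbol{m}_h^i$, $\boldsymbol{w}_h^{i+1} = 2\boldsymbol{z}_h^{i,\ell_i+1}-\boldsymbol{w}_h^i$, and $\boldsymbol{r}_h^i := \boldsymbol{z}_h^{i,\ell_i+1}-\boldsymbol{z}_h^{i,\ell_i}$ (so $\|\boldsymbol{r}_h^i\|_h\le\varepsilon$). *)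

theory Defs
  imports "HOL-Analysis.Analysis" "HOL-Analysis.Cross3"
begin

definition lipschitz_domain :: "(real^'d) set \<Rightarrow> bool" where
  "lipschitz_domain \<Omega> \<longleftrightarrow> open \<Omega> \<and> bounded \<Omega> \<and> connected \<Omega> \<and>
     (\<forall>x\<in>frontier \<Omega>. \<exists>r>0. \<exists>(e::real^'d) (g::real^'d \<Rightarrow> real) (L::real).
        norm e = 1 \<and> (\<forall>y t. g (y + t *\<^sub>R e) = g y) \<and>
        (\<forall>y y'. \<bar>g y - g y'\<bar> \<le> L * norm (y - y')) \<and>
        ball x r \<inter> \<Omega> = {y \<in> ball x r. y \<bullet> e < g y})"

definition polytopal :: "(real^'d) set \<Rightarrow> bool" where
  "polytopal \<Omega> \<longleftrightarrow> (\<exists>P. finite P \<and> (\<forall>p\<in>P. polytope p) \<and> closure \<Omega> = \<Union>P)"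

text \<open>A conforming simplicial mesh, each element given by its set of d+1 affinely
independent vertices; the element itself is the convex hull.\<close>
definition simplicial_mesh :: "(real^'d) set \<Rightarrow> (real^'d) set set \<Rightarrow> bool" where
  "simplicial_mesh \<Omega> Tv \<longleftrightarrow> finite Tv \<and>
     (\<forall>V\<in>Tv. finite V \<and> card V = CARD('d) + 1 \<and> \<not> affine_dependent V) \<and>
     \<Union>((\<lambda>V. convex hull V) ` Tv) = closure \<Omega> \<and>
     (\<forall>V\<in>Tv. \<forall>W\<in>Tv. convex hull V \<inter> convex hull W = convex hull (V \<inter> W))"

definition nodes :: "(real^'d) set set \<Rightarrow> (real^'d) set" where
  "nodes Tv = \<Union>Tv"

definition S1 :: "(real^'d) set \<Rightarrow> (real^'d) set set \<Rightarrow> (real^'d \<Rightarrow> 'b::real_normed_vector) set" where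
  "S1 \<Omega> Tv = {f. continuous_on (closure \<Omega>) f \<and>
      (\<forall>V\<in>Tv. \<exists>A b. linear A \<and> (\<forall>x\<in>convex hull V. f x = A x + b)) \<and>
      (\<forall>x. x \<notin> closure \<Omega> \<longrightarrow> f x = 0)}"

definition hat :: "(real^'d) set \<Rightarrow> (real^'d) set set \<Rightarrow> real^'d \<Rightarrow> (real^'d \<Rightarrow> real)" where
  "hat \<Omega> Tv z = (THE \<phi>. \<phi> \<in> S1 \<Omega> Tv \<and>
      (\<forall>z'\<in>nodes Tv. \<phi> z' = (if z' = z then 1 else 0)))"

definition interp :: "(real^'d) set \<Rightarrow> (real^'d) set set \<Rightarrow> (real^'d \<Rightarrow> 'b::real_vector) \<Rightarrow> (real^'d \<Rightarrow> 'b)" where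
  "interp \<Omega> Tv g = (\<lambda>x. \<Sum>z\<in>nodes Tv. hat \<Omega> Tv z x *\<^sub>R g z)"

definition lprod :: "(real^'d) set \<Rightarrow> (real^'d) set set \<Rightarrow> (real^'d \<Rightarrow> 'b::real_inner) \<Rightarrow> (real^'d \<Rightarrow> 'b) \<Rightarrow> real" where
  "lprod \<Omega> Tv \<psi> \<phi> = integral \<Omega> (interp \<Omega> Tv (\<lambda>x. \<psi> x \<bullet> \<phi> x))"

definition hnorm :: "(real^'d) set \<Rightarrow> (real^'d) set set \<Rightarrow> (real^'d \<Rightarrow> 'b::real_inner) \<Rightarrow> real" where
  "hnorm \<Omega> Tv \<psi> = sqrt (lprod \<Omega> Tv \<psi> \<psi>)"

definition dprod :: "(real^'d) set \<Rightarrow> (real^'d \<Rightarrow> 'b::real_inner) \<Rightarrow> (real^'d \<Rightarrow> 'b) \<Rightarrow> real" where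
  "dprod \<Omega> u v = integral \<Omega> (\<lambda>x. \<Sum>j\<in>Basis.
      frechet_derivative u (at x) j \<bullet> frechet_derivative v (at x) j)"

definition energy :: "(real^'d) set \<Rightarrow> (real^'d \<Rightarrow> real^3) \<Rightarrow> real" where
  "energy \<Omega> m = dprod \<Omega> m m / 2"

definition Ph_heff :: "(real^'d) set \<Rightarrow> (real^'d) set set \<Rightarrow> (real^'d \<Rightarrow> real^3) \<Rightarrow> (real^'d \<Rightarrow> real^3)" where
  "Ph_heff \<Omega> Tv m = (THE p. p \<in> S1 \<Omega> Tv \<and>
      (\<forall>\<phi>\<in>S1 \<Omega> Tv. lprod \<Omega> Tv p \<phi> = - dprod \<Omega> m \<phi>))"

definition Jh :: "(real^'d) set \<Rightarrow> (real^'d) set set \<Rightarrow> real \<Rightarrow> (real^'d \<Rightarrow> real^3) \<Rightarrow> (real^'d \<Rightarrow> real^3) \<Rightarrow> real" where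
  "Jh \<Omega> Tv \<tau> m u = energy \<Omega> m + \<tau> / 2 * (hnorm \<Omega> Tv u)\<^sup>2"

definition Mh :: "(real^'d) set \<Rightarrow> (real^'d) set set \<Rightarrow> (real^'d \<Rightarrow> real^3) set" where
  "Mh \<Omega> Tv = {\<phi> \<in> S1 \<Omega> Tv. \<forall>z\<in>nodes Tv. norm (\<phi> z) = 1}"

definition Kh :: "(real^'d) set \<Rightarrow> (real^'d) set set \<Rightarrow> (real^'d \<Rightarrow> real^3) \<Rightarrow> (real^'d \<Rightarrow> real^3) set" where
  "Kh \<Omega> Tv \<psi> = {\<phi> \<in> S1 \<Omega> Tv. \<forall>z\<in>nodes Tv. \<psi> z \<bullet> \<phi> z = 0}"

definition dt :: "real \<Rightarrow> (real^'d \<Rightarrow> real^3) \<Rightarrow> (real^'d \<Rightarrow> real^3) \<Rightarrow> (real^'d \<Rightarrow> real^3)" where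
  "dt k new old = (\<lambda>x. (1 / k) *\<^sub>R (new x - old x))"

definition mid :: "(real^'d \<Rightarrow> real^3) \<Rightarrow> (real^'d \<Rightarrow> real^3) \<Rightarrow> (real^'d \<Rightarrow> real^3)" where
  "mid new old = (\<lambda>x. (1 / 2) *\<^sub>R (new x + old x))"

definition fcross :: "(real^'d \<Rightarrow> real^3) \<Rightarrow> (real^'d \<Rightarrow> real^3) \<Rightarrow> (real^'d \<Rightarrow> real^3)" where
  "fcross f g = (\<lambda>x. cross3 (f x) (g x))"

definition tangent_plane_scheme ::
  "(real^'d) set \<Rightarrow> (real^'d) set set \<Rightarrow> real \<Rightarrow> real \<Rightarrow> real \<Rightarrow> nat \<Rightarrow>
   (nat \<Rightarrow> real^'d \<Rightarrow> real^3) \<Rightarrow> (nat \<Rightarrow> real^'d \<Rightarrow> real^3) \<Rightarrow> bool" where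
  "tangent_plane_scheme \<Omega> Tv \<alpha> \<tau> k n m v \<longleftrightarrow>
     m 0 \<in> Mh \<Omega> Tv \<and> v 0 \<in> Kh \<Omega> Tv (m 0) \<and>
     (\<forall>i<n. v (Suc i) \<in> Kh \<Omega> Tv (m i) \<and>
        (\<forall>\<phi>\<in>Kh \<Omega> Tv (m i).
            \<tau> * lprod \<Omega> Tv (dt k (v (Suc i)) (v i)) \<phi> + \<alpha> * lprod \<Omega> Tv (v (Suc i)) \<phi>
          + lprod \<Omega> Tv (fcross (m i) (v (Suc i))) \<phi>
          - k * lprod \<Omega> Tv (Ph_heff \<Omega> Tv (v (Suc i))) \<phi>
          = lprod \<Omega> Tv (Ph_heff \<Omega> Tv (m i)) \<phi>) \<and>
        m (Suc i) = interp \<Omega> Tv (\<lambda>x. (1 / norm (m i x + k *\<^sub>R v (Suc i) x)) *\<^sub>R (m i x + k *\<^sub>R v (Suc i) x)))"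

definition nonlinear_am_method ::
  "(real^'d) set \<Rightarrow> (real^'d) set set \<Rightarrow> real \<Rightarrow> real \<Rightarrow> real \<Rightarrow> nat \<Rightarrow>
   (real^'d \<Rightarrow> real^3) \<Rightarrow> (nat \<Rightarrow> real^'d \<Rightarrow> real^3) \<Rightarrow> (nat \<Rightarrow> real^'d \<Rightarrow> real^3) \<Rightarrow> bool" where
  "nonlinear_am_method \<Omega> Tv \<alpha> \<tau> k n v0 m w \<longleftrightarrow>
     m 0 \<in> Mh \<Omega> Tv \<and> v0 \<in> Kh \<Omega> Tv (m 0) \<and> w 0 = interp \<Omega> Tv (fcross (m 0) v0) \<and>
     (\<forall>i<n. m (Suc i) \<in> Mh \<Omega> Tv \<and> w (Suc i) \<in> Kh \<Omega> Tv (m (Suc i)) \<and>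
        (\<forall>\<phi>\<in>S1 \<Omega> Tv. lprod \<Omega> Tv (dt k (m (Suc i)) (m i)) \<phi>
            = - lprod \<Omega> Tv (fcross (mid (m (Suc i)) (m i)) (mid (w (Suc i)) (w i))) \<phi>) \<and>
        (\<forall>\<psi>\<in>S1 \<Omega> Tv. \<tau> * lprod \<Omega> Tv (dt k (w (Suc i)) (w i)) \<psi>
            = lprod \<Omega> Tv (fcross (mid (m (Suc i)) (m i)) (Ph_heff \<Omega> Tv (mid (m (Suc i)) (m i)))) \<psi>
              - \<alpha> * lprod \<Omega> Tv (fcross (mid (m (Suc i)) (m i)) (dt k (m (Suc i)) (m i))) \<psi>
              - lprod \<Omega> Tv (fcross (mid (m (Suc i)) (m i)) (mid (w (Suc i)) (w i))) \<psi>))"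

text \<open>Linearized method: u i l, z i l are the inner iterates, lfin i is the stopping index
l_i (first index meeting the stopping criterion).\<close>
definition linearized_am_method ::
  "(real^'d) set \<Rightarrow> (real^'d) set set \<Rightarrow> real \<Rightarrow> real \<Rightarrow> real \<Rightarrow> real \<Rightarrow> nat \<Rightarrow>
   (real^'d \<Rightarrow> real^3) \<Rightarrow> (nat \<Rightarrow> real^'d \<Rightarrow> real^3) \<Rightarrow> (nat \<Rightarrow> real^'d \<Rightarrow> real^3) \<Rightarrow>
   (nat \<Rightarrow> nat \<Rightarrow> real^'d \<Rightarrow> real^3) \<Rightarrow> (nat \<Rightarrow> nat \<Rightarrow> real^'d \<Rightarrow> real^3) \<Rightarrow> (nat \<Rightarrow> nat) \<Rightarrow> bool" where
  "linearized_am_method \<Omega> Tv \<alpha> \<tau> k \<epsilon> n v0 m w u z lfin \<longleftrightarrow>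
     m 0 \<in> Mh \<Omega> Tv \<and> v0 \<in> Kh \<Omega> Tv (m 0) \<and> w 0 = interp \<Omega> Tv (fcross (m 0) v0) \<and>
     (\<forall>i<n. u i 0 = m i \<and> z i 0 = w i \<and>
        (\<forall>l\<le>lfin i.
           u i (Suc l) \<in> S1 \<Omega> Tv \<and>
           (\<forall>\<phi>\<in>S1 \<Omega> Tv. 2 * lprod \<Omega> Tv (u i (Suc l)) \<phi>
               + k * lprod \<Omega> Tv (fcross (u i (Suc l)) (z i l)) \<phi> = 2 * lprod \<Omega> Tv (m i) \<phi>) \<and>
           z i (Suc l) \<in> S1 \<Omega> Tv \<and>
           (\<forall>\<psi>\<in>S1 \<Omega> Tv. 2 * \<tau> * lprod \<Omega> Tv (z i (Suc l)) \<psi>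
               + k * lprod \<Omega> Tv (fcross (u i (Suc l)) (z i (Suc l))) \<psi>
             = k * lprod \<Omega> Tv (fcross (u i (Suc l)) (Ph_heff \<Omega> Tv (u i (Suc l)))) \<psi>
               + 2 * \<alpha> * lprod \<Omega> Tv (fcross (u i (Suc l)) (m i)) \<psi>
               + 2 * \<tau> * lprod \<Omega> Tv (w i) \<psi>)) \<and>
        (\<forall>l<lfin i. hnorm \<Omega> Tv (\<lambda>x. u i (Suc l) x - u i l x)
                   + hnorm \<Omega> Tv (\<lambda>x. z i (Suc l) x - z i l x) > \<epsilon>) \<and>
        hnorm \<Omega> Tv (\<lambda>x. u i (Suc (lfin i)) x - u i (lfin i) x)
          + hnorm \<Omega> Tv (\<lambda>x. z i (Suc (lfin i)) x - z i (lfin i) x) \<le> \<epsilon> \<and>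
        m (Suc i) = (\<lambda>x. 2 *\<^sub>R u i (Suc (lfin i)) x - m i x) \<and>
        w (Suc i) = (\<lambda>x. 2 *\<^sub>R z i (Suc (lfin i)) x - w i x))"

definition residual :: "(nat \<Rightarrow> nat \<Rightarrow> real^'d \<Rightarrow> real^3) \<Rightarrow> (nat \<Rightarrow> nat) \<Rightarrow> nat \<Rightarrow> real^'d \<Rightarrow> real^3" where
  "residual z lfin i = (\<lambda>x. z i (Suc (lfin i)) x - z i (lfin i) x)"

end

(* Mass lumping turns the discrete L2 product into a sum over the nodes with positive weights,
   so each energy law comes from testing the scheme with a suitable discrete function.
   For the angular momentum methods one tests the equation for m with P_h h_eff - alpha d_t m and
   the equation for w with the midpoint value of w: the cross products cancel nodewise, and the
   midpoint identities (d_t a, a^{i+1/2}) = (|a^{i+1}|^2 - |a^i|^2) / (2k) for both the lumped and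
   the gradient product give the energy balance. The linearized method is the midpoint rule with
   w^{i+1/2} replaced by the previous inner iterate in the equation for m, which leaves the last
   increment r as a defect in the balance.
   For the tangent plane scheme one tests with v^{i+1}. The nodal projection onto the sphere does
   not increase the Dirichlet energy: under the angle condition this energy is a sum of squared
   nodal differences with nonnegative weights, and normalization is a contraction on vectors of
   length at least one. *)

theory Submission
  imports Defs
begin

lemma affine_fun_convex_combination:
  fixes A :: "'a::real_vector \<Rightarrow> 'b::real_vector"
  assumes "linear A" "sum u V = 1"
  shows "A (\<Sum>v\<in>V. u v *\<^sub>R v) + b = (\<Sum>v\<in>V. u v *\<^sub>R (A v + b))"
proof -
  have "b = (\<Sum>v\<in>V. u v) *\<^sub>R b" using assms(2) by simp
  then show ?thesis
    using assms(1) by (simp add: linear_sum linear_scale scaleR_add_right sum.distrib scaleR_sum_left)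
qed

lemma affine_fun_eq_on_convex_hull:
  fixes A A' :: "'a::real_vector \<Rightarrow> 'b::real_vector"
  assumes "linear A" "linear A'" "finite V" "x \<in> convex hull V"
    and "\<And>v. v \<in> V \<Longrightarrow> A v + b = A' v + b'"
  shows "A x + b = A' x + b'"
proof -
  obtain u where u: "sum u V = 1" "(\<Sum>v\<in>V. u v *\<^sub>R v) = x"
    using assms(3,4) by (auto simp: convex_hull_finite)
  have "A x + b = (\<Sum>v\<in>V. u v *\<^sub>R (A v + b))"
    using affine_fun_convex_combination[OF assms(1) u(1)] u(2) by simp
  also have "\<dots> = (\<Sum>v\<in>V. u v *\<^sub>R (A' v + b'))" using assms(5) by simp
  also have "\<dots> = A' x + b'"
    using affine_fun_convex_combination[OF assms(2) u(1)] u(2) by simp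
  finally show ?thesis .
qed

lemma affine_fun_nonneg_on_convex_hull:
  fixes A :: "'a::real_vector \<Rightarrow> real"
  assumes "linear A" "finite V" "x \<in> convex hull V" "\<And>v. v \<in> V \<Longrightarrow> A v + b \<ge> 0"
  shows "A x + b \<ge> 0"
proof -
  obtain u where u: "\<forall>v\<in>V. 0 \<le> u v" "sum u V = 1" "(\<Sum>v\<in>V. u v *\<^sub>R v) = x"
    using assms(2,3) by (auto simp: convex_hull_finite)
  have "A x + b = (\<Sum>v\<in>V. u v *\<^sub>R (A v + b))"
    using affine_fun_convex_combination[OF assms(1) u(2)] u(3) by simp
  also have "\<dots> \<ge> 0" using assms(4) u(1) by (auto intro!: sum_nonneg)
  finally show ?thesis .
qed

lemma affine_fun_interpolation_exists:
  fixes V :: "'a::euclidean_space set" and f :: "'a \<Rightarrow> 'b::real_vector"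
  assumes "\<not> affine_dependent V"
  shows "\<exists>A b. linear A \<and> (\<forall>v\<in>V. A v + b = f v)"
proof (cases "V = {}")
  case True
  then show ?thesis by (auto intro: linear_zero)
next
  case False
  then obtain v0 where v0: "v0 \<in> V" by blast
  have "\<not> dependent ((\<lambda>x. -v0 + x) ` (V - {v0}))"
    using assms affine_dependent_iff_dependent2[OF v0] by simp
  from linear_independent_extend[OF this, of "\<lambda>y. f (y + v0) - f v0"]
  obtain g where g: "linear g" "\<forall>y\<in>(\<lambda>x. -v0 + x) ` (V - {v0}). g y = f (y + v0) - f v0"
    by blast
  have "g v + (f v0 - g v0) = f v" if "v \<in> V" for v
  proof (cases "v = v0")
    case False
    then have "f v - f v0 = g (-v0 + v)" using g(2) that by auto
    also have "\<dots> = g v - g v0" using g(1) by (simp add: linear_diff)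
    finally have "f v = (g v - g v0) + f v0" by (metis diff_add_cancel)
    also have "\<dots> = g v + (f v0 - g v0)" by (simp add: algebra_simps)
    finally show ?thesis by (rule sym)
  qed simp
  then show ?thesis using g(1) by blast
qed

lemma S1I:
  assumes "continuous_on (closure \<Omega>) f"
    and "\<And>V. V \<in> Tv \<Longrightarrow> \<exists>A b. linear A \<and> (\<forall>x\<in>convex hull V. f x = A x + b)"
    and "\<And>x. x \<notin> closure \<Omega> \<Longrightarrow> f x = 0"
  shows "f \<in> S1 \<Omega> Tv"
  using assms unfolding S1_def by auto

lemma S1D:
  assumes "f \<in> S1 \<Omega> Tv"
  shows "continuous_on (closure \<Omega>) f"
    and "\<And>V. V \<in> Tv \<Longrightarrow> \<exists>A b. linear A \<and> (\<forall>x\<in>convex hull V. f x = A x + b)"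
    and "\<And>x. x \<notin> closure \<Omega> \<Longrightarrow> f x = 0"
  using assms unfolding S1_def by auto

lemma S1_zero: "(\<lambda>x. 0) \<in> S1 \<Omega> Tv"
  by (rule S1I) (auto intro: linear_zero)

lemma S1_add:
  assumes f: "f \<in> S1 \<Omega> Tv" and g: "g \<in> S1 \<Omega> Tv"
  shows "(\<lambda>x. f x + g x) \<in> S1 \<Omega> Tv"
proof (rule S1I)
  fix V assume V: "V \<in> Tv"
  obtain A b where "linear A" "\<forall>x\<in>convex hull V. f x = A x + b" using S1D(2)[OF f V] by blast
  moreover obtain A' b' where "linear A'" "\<forall>x\<in>convex hull V. g x = A' x + b'" using S1D(2)[OF g V] by blast
  ultimately show "\<exists>A b. linear A \<and> (\<forall>x\<in>convex hull V. f x + g x = A x + b)"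
    by (intro exI[of _ "\<lambda>x. A x + A' x"] exI[of _ "b + b'"]) (auto intro: linear_compose_add)
next
  show "continuous_on (closure \<Omega>) (\<lambda>x. f x + g x)"
    using S1D(1)[OF f] S1D(1)[OF g] by (intro continuous_intros)
qed (simp add: S1D(3)[OF f] S1D(3)[OF g])

lemma S1_scaleR:
  assumes f: "f \<in> S1 \<Omega> Tv"
  shows "(\<lambda>x. c *\<^sub>R f x) \<in> S1 \<Omega> Tv"
proof (rule S1I)
  fix V assume V: "V \<in> Tv"
  obtain A b where "linear A" "\<forall>x\<in>convex hull V. f x = A x + b" using S1D(2)[OF f V] by blast
  then show "\<exists>A b. linear A \<and> (\<forall>x\<in>convex hull V. c *\<^sub>R f x = A x + b)"
    by (intro exI[of _ "\<lambda>x. c *\<^sub>R A x"] exI[of _ "c *\<^sub>R b"])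
      (auto simp: scaleR_add_right intro: linear_compose_scale_right)
next
  show "continuous_on (closure \<Omega>) (\<lambda>x. c *\<^sub>R f x)" using S1D(1)[OF f] by (intro continuous_intros)
qed (simp add: S1D(3)[OF f])

lemma S1_scaleR_const:
  assumes f: "(\<phi> :: _ \<Rightarrow> real) \<in> S1 \<Omega> Tv"
  shows "(\<lambda>x. \<phi> x *\<^sub>R c) \<in> S1 \<Omega> Tv"
proof (rule S1I)
  fix V assume V: "V \<in> Tv"
  obtain A b where A: "linear A" "\<forall>x\<in>convex hull V. \<phi> x = A x + b" using S1D(2)[OF f V] by blast
  have "linear (\<lambda>x. A x *\<^sub>R c)"
    using linear_compose[OF A(1) bounded_linear.linear[OF bounded_linear_scaleR_left]] by (simp add: o_def)
  then show "\<exists>A b. linear A \<and> (\<forall>x\<in>convex hull V. \<phi> x *\<^sub>R c = A x + b)"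
    using A(2) by (intro exI[of _ "\<lambda>x. A x *\<^sub>R c"] exI[of _ "b *\<^sub>R c"]) (auto simp: scaleR_add_left)
next
  show "continuous_on (closure \<Omega>) (\<lambda>x. \<phi> x *\<^sub>R c)" using S1D(1)[OF f] by (intro continuous_intros)
qed (simp add: S1D(3)[OF f])

lemma S1_diff: "f \<in> S1 \<Omega> Tv \<Longrightarrow> g \<in> S1 \<Omega> Tv \<Longrightarrow> (\<lambda>x. f x - g x) \<in> S1 \<Omega> Tv"
  using S1_add[of f \<Omega> Tv "\<lambda>x. (-1) *\<^sub>R g x"] S1_scaleR[of g \<Omega> Tv "-1"] by simp

lemma S1_sum: "finite I \<Longrightarrow> (\<And>i. i \<in> I \<Longrightarrow> f i \<in> S1 \<Omega> Tv) \<Longrightarrow> (\<lambda>x. \<Sum>i\<in>I. f i x) \<in> S1 \<Omega> Tv"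
  by (induction I rule: finite_induct) (auto intro: S1_zero S1_add)

lemma S1_mid: "a \<in> S1 \<Omega> Tv \<Longrightarrow> b \<in> S1 \<Omega> Tv \<Longrightarrow> mid a b \<in> S1 \<Omega> Tv"
  unfolding mid_def by (intro S1_scaleR S1_add)

lemma S1_dt: "a \<in> S1 \<Omega> Tv \<Longrightarrow> b \<in> S1 \<Omega> Tv \<Longrightarrow> dt k a b \<in> S1 \<Omega> Tv"
  unfolding dt_def by (intro S1_scaleR S1_diff)

lemma integrable_on_continuous_closure:
  fixes f :: "'a::euclidean_space \<Rightarrow> real"
  assumes "bounded S" "S \<in> lmeasurable" "continuous_on (closure S) f"
  shows "f integrable_on S"
proof -
  have "compact (closure S)" using assms(1) compact_closure by blast
  then have "bounded (f ` closure S)"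
    using compact_continuous_image[OF assms(3)] compact_imp_bounded by blast
  then obtain B where B: "\<forall>y\<in>f ` closure S. norm y \<le> B" by (auto simp: bounded_iff)
  have S: "S \<in> sets lebesgue" using assms(2) by (simp add: fmeasurableD)
  show ?thesis
  proof (rule measurable_bounded_by_integrable_imp_integrable[where g = "\<lambda>x. B"])
    show "f \<in> borel_measurable (lebesgue_on S)"
      using continuous_on_subset[OF assms(3) closure_subset] S
      by (rule continuous_imp_measurable_on_sets_lebesgue)
    show "(\<lambda>x. B) integrable_on S" by (rule integrable_on_const[OF assms(2)])
    show "\<And>x. x \<in> S \<Longrightarrow> norm (f x) \<le> B" using B closure_subset by auto
  qed (fact S)
qed

lemma integral_pos_continuous:
  fixes f :: "'a::euclidean_space \<Rightarrow> real"
  assumes S: "open S" and f: "f integrable_on S" "continuous_on S f" "\<And>x. x \<in> S \<Longrightarrow> 0 \<le> f x"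
    and x0: "x0 \<in> S" "0 < f x0"
  shows "0 < integral S f"
proof -
  obtain r where r: "0 < r" "ball x0 r \<subseteq> S" "\<And>x. x \<in> ball x0 r \<Longrightarrow> f x0 / 2 \<le> f x"
  proof -
    obtain r1 where r1: "0 < r1" "\<And>x. x \<in> S \<Longrightarrow> dist x x0 < r1 \<Longrightarrow> dist (f x) (f x0) < f x0 / 2"
      using f(2) x0 unfolding continuous_on_iff by (metis half_gt_zero)
    obtain r2 where r2: "0 < r2" "ball x0 r2 \<subseteq> S" using S x0(1) openE by blast
    show thesis
    proof (rule that[of "min r1 r2"])
      fix x assume "x \<in> ball x0 (min r1 r2)"
      then have "x \<in> S" "dist x x0 < r1" using r2(2) by (auto simp: dist_commute)
      then have "\<bar>f x - f x0\<bar> < f x0 / 2" using r1(2) by (simp add: dist_real_def)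
      then show "f x0 / 2 \<le> f x" by linarith
    qed (use r1 r2 in auto)
  qed
  have ball: "ball x0 r \<in> lmeasurable" by simp
  have "0 < f x0 / 2 * measure lebesgue (ball x0 r)"
    using x0(2) r(1) ball open_not_negligible[of "ball x0 r"] negligible_iff_measure0[OF ball]
    by (simp add: zero_less_measure_iff)
  also have "\<dots> = integral (ball x0 r) (\<lambda>x. f x0 / 2)"
    unfolding lmeasure_integral[OF ball] integral_mult_right[of "ball x0 r" "f x0 / 2" "\<lambda>x. 1", symmetric]
    by simp
  also have "\<dots> = integral S (\<lambda>x. if x \<in> ball x0 r then f x0 / 2 else 0)"
    unfolding integral_restrict_Int using r(2) by (simp add: Int_absorb2)
  also have "\<dots> \<le> integral S f"
  proof (rule integral_le[OF _ f(1)])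
    show "(\<lambda>x. if x \<in> ball x0 r then f x0 / 2 else 0) integrable_on S"
      unfolding integrable_restrict_Int using r(2) ball by (simp add: Int_absorb2 integrable_on_const)
  qed (use r(3) f(3) x0(2) in auto)
  finally show ?thesis .
qed

lemma norm_le_norm_add_orthogonal:
  fixes x y :: "'a::real_inner"
  assumes "x \<bullet> y = 0"
  shows "norm x \<le> norm (x + y)"
  using norm_add_Pythagorean[of x y] assms by (simp add: orthogonal_def power2_le_imp_le)

lemma norm_diff_normalize_le:
  fixes a b :: "'a::real_inner"
  assumes a: "1 \<le> norm a" and b: "1 \<le> norm b"
  shows "norm ((1 / norm a) *\<^sub>R a - (1 / norm b) *\<^sub>R b) \<le> norm (a - b)"
proof -
  define s t p where "s = norm a" and "t = norm b" and "p = a \<bullet> b"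
  have s: "1 \<le> s" and t: "1 \<le> t" using a b by (auto simp: s_def t_def)
  have st: "1 \<le> s * t" using s t by (metis mult_mono' mult_1 zero_le_one order_trans)
  have p: "p \<le> s * t" unfolding p_def s_def t_def by (rule norm_cauchy_schwarz)
  have aa: "a \<bullet> a = s\<^sup>2" and bb: "b \<bullet> b = t\<^sup>2" by (simp_all add: s_def t_def power2_norm_eq_inner)
  have "(norm ((1 / s) *\<^sub>R a - (1 / t) *\<^sub>R b))\<^sup>2 = (1/s)\<^sup>2 * (a \<bullet> a) + (1/t)\<^sup>2 * (b \<bullet> b) - 2 * (p / (s * t))"
    unfolding power2_norm_eq_inner p_def
    by (simp add: inner_diff_left inner_diff_right inner_commute[of b a] power2_eq_square algebra_simps)
  also have "\<dots> = 2 - 2 * (p / (s * t))" using s t aa bb by (simp add: field_simps power2_eq_square)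
  also have "\<dots> \<le> s\<^sup>2 + t\<^sup>2 - 2 * p"
  proof -
    have "s\<^sup>2 + t\<^sup>2 - 2 * p - (2 - 2 * (p / (s * t))) = (s - t)\<^sup>2 + 2 * (s * t - p) * (1 - 1 / (s * t))"
      using s t by (simp add: field_simps power2_eq_square)
    moreover have "0 \<le> 2 * (s * t - p) * (1 - 1 / (s * t))" using p st by simp
    ultimately show ?thesis using zero_le_power2[of "s - t"] by linarith
  qed
  also have "\<dots> = (norm (a - b))\<^sup>2"
    unfolding power2_norm_eq_inner p_def using aa bb
    by (simp add: inner_diff_left inner_diff_right inner_commute[of b a])
  finally show ?thesis unfolding s_def t_def by (rule power2_le_imp_le) simp
qed

section \<open>Hat functions and nodal interpolation\<close>

locale fe_mesh =
  fixes \<Omega> :: "(real^'d) set" and Tv :: "(real^'d) set set"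
  assumes mesh: "simplicial_mesh \<Omega> Tv" and open_domain: "open \<Omega>" and bounded_domain: "bounded \<Omega>"
begin

abbreviation N :: "(real^'d) set" where
  "N \<equiv> nodes Tv"

lemma finite_mesh: "finite Tv"
  and finite_element: "V \<in> Tv \<Longrightarrow> finite V"
  and card_element: "V \<in> Tv \<Longrightarrow> card V = CARD('d) + 1"
  and element_affine_independent: "V \<in> Tv \<Longrightarrow> \<not> affine_dependent V"
  and mesh_covers: "\<Union>((\<lambda>V. convex hull V) ` Tv) = closure \<Omega>"
  and mesh_conforming: "V \<in> Tv \<Longrightarrow> W \<in> Tv \<Longrightarrow> convex hull V \<inter> convex hull W = convex hull (V \<inter> W)"
  using mesh unfolding simplicial_mesh_def by auto

lemma finite_nodes: "finite N"
  using finite_mesh finite_element by (auto simp: nodes_def)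

lemma element_subset_nodes: "V \<in> Tv \<Longrightarrow> V \<subseteq> N"
  by (auto simp: nodes_def)

lemma closed_element: "V \<in> Tv \<Longrightarrow> closed (convex hull V)"
  by (simp add: compact_imp_closed finite_element finite_imp_compact_convex_hull)

lemma element_subset_closure: "V \<in> Tv \<Longrightarrow> convex hull V \<subseteq> closure \<Omega>"
  using mesh_covers by blast

lemma closure_covered: "x \<in> closure \<Omega> \<Longrightarrow> \<exists>V\<in>Tv. x \<in> convex hull V"
  using mesh_covers by blast

lemma node_in_closure: "z \<in> N \<Longrightarrow> z \<in> closure \<Omega>"
  using element_subset_closure hull_inc by (fastforce simp: nodes_def)

definition local_hat :: "(real^'d) set \<Rightarrow> real^'d \<Rightarrow> real^'d \<Rightarrow> real" where
  "local_hat V z = (SOME \<phi>. (\<exists>A b. linear A \<and> \<phi> = (\<lambda>x. A x + b)) \<and>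
                           (\<forall>v\<in>V. \<phi> v = (if v = z then 1 else 0)))"

lemma local_hat:
  assumes "V \<in> Tv"
  shows "\<exists>A b. linear A \<and> local_hat V z = (\<lambda>x. A x + b)"
    and "v \<in> V \<Longrightarrow> local_hat V z v = (if v = z then 1 else 0)"
proof -
  let ?P = "\<lambda>\<phi>. (\<exists>A b. linear A \<and> \<phi> = (\<lambda>x. A x + b)) \<and> (\<forall>v\<in>V. \<phi> v = (if v = z then 1 else 0))"
  obtain A b where "linear A" "\<forall>v\<in>V. A v + b = (if v = z then 1 else (0::real))"
    using affine_fun_interpolation_exists[OF element_affine_independent[OF assms],
        of "\<lambda>v. if v = z then 1 else 0"] by blast
  then have "?P (\<lambda>x. A x + b)" by blast
  then have "?P (local_hat V z)" unfolding local_hat_def by (rule someI[of ?P])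
  then show "\<exists>A b. linear A \<and> local_hat V z = (\<lambda>x. A x + b)"
    and "v \<in> V \<Longrightarrow> local_hat V z v = (if v = z then 1 else 0)"
    by auto
qed

lemma local_hat_agree:
  assumes "V \<in> Tv" "W \<in> Tv" "x \<in> convex hull V" "x \<in> convex hull W"
  shows "local_hat V z x = local_hat W z x"
proof -
  obtain A b where A: "linear A" "local_hat V z = (\<lambda>x. A x + b)" using local_hat(1)[OF assms(1)] by blast
  obtain A' b' where A': "linear A'" "local_hat W z = (\<lambda>x. A' x + b')" using local_hat(1)[OF assms(2)] by blast
  have "x \<in> convex hull (V \<inter> W)" using mesh_conforming[OF assms(1,2)] assms(3,4) by blast
  moreover have "finite (V \<inter> W)" using finite_element[OF assms(1)] by simp
  moreover have "A v + b = A' v + b'" if "v \<in> V \<inter> W" for v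
    using local_hat(2)[OF assms(1), of v z] local_hat(2)[OF assms(2), of v z] A(2) A'(2) that by simp
  ultimately have "A x + b = A' x + b'"
    using affine_fun_eq_on_convex_hull[OF A(1) A'(1)] by blast
  then show ?thesis using A(2) A'(2) by simp
qed

text \<open>Well defined because the mesh is conforming: the affine pieces agree on common faces.\<close>
definition glued_hat :: "real^'d \<Rightarrow> real^'d \<Rightarrow> real" where
  "glued_hat z x = (if x \<in> closure \<Omega> then local_hat (SOME V. V \<in> Tv \<and> x \<in> convex hull V) z x else 0)"

lemma glued_hat_on_element:
  assumes "V \<in> Tv" "x \<in> convex hull V"
  shows "glued_hat z x = local_hat V z x"
proof -
  have "(SOME V. V \<in> Tv \<and> x \<in> convex hull V) \<in> Tv \<and> x \<in> convex hull (SOME V. V \<in> Tv \<and> x \<in> convex hull V)"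
    by (rule someI[of _ V]) (use assms in auto)
  then show ?thesis
    using local_hat_agree[OF _ assms(1) _ assms(2)] element_subset_closure[OF assms(1)] assms(2)
    unfolding glued_hat_def by auto
qed

lemma glued_hat_S1: "glued_hat z \<in> S1 \<Omega> Tv"
proof (rule S1I)
  have "continuous_on (convex hull V) (glued_hat z)" if V: "V \<in> Tv" for V
  proof -
    obtain A b where A: "linear A" "local_hat V z = (\<lambda>x. A x + b)" using local_hat(1)[OF V] by blast
    have "continuous_on (convex hull V) (local_hat V z)"
      unfolding A(2) using A(1) by (intro continuous_intros linear_continuous_on) (simp add: linear_conv_bounded_linear)
    then show ?thesis using glued_hat_on_element[OF V] by (simp cong: continuous_on_cong)
  qed
  then have "continuous_on (\<Union>V\<in>Tv. convex hull V) (glued_hat z)"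
    by (intro continuous_on_closed_Union finite_mesh closed_element)
  then show "continuous_on (closure \<Omega>) (glued_hat z)" using mesh_covers by simp
next
  fix V assume V: "V \<in> Tv"
  then show "\<exists>A b. linear A \<and> (\<forall>x\<in>convex hull V. glued_hat z x = A x + b)"
    using local_hat(1)[OF V] glued_hat_on_element[OF V] by metis
qed (simp add: glued_hat_def)

lemma glued_hat_node: "z' \<in> N \<Longrightarrow> glued_hat z z' = (if z' = z then 1 else 0)"
  using glued_hat_on_element local_hat(2) hull_inc by (fastforce simp: nodes_def)

lemma S1_nodal_eqI:
  fixes f g :: "real^'d \<Rightarrow> 'b::real_normed_vector"
  assumes f: "f \<in> S1 \<Omega> Tv" and g: "g \<in> S1 \<Omega> Tv" and fg: "\<And>z. z \<in> N \<Longrightarrow> f z = g z"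
  shows "f = g"
proof
  fix x
  show "f x = g x"
  proof (cases "x \<in> closure \<Omega>")
    case True
    then obtain V where V: "V \<in> Tv" "x \<in> convex hull V" using closure_covered by blast
    obtain A b where A: "linear A" "\<forall>x\<in>convex hull V. f x = A x + b" using S1D(2)[OF f V(1)] by blast
    obtain A' b' where A': "linear A'" "\<forall>x\<in>convex hull V. g x = A' x + b'" using S1D(2)[OF g V(1)] by blast
    have "A x + b = A' x + b'"
      by (rule affine_fun_eq_on_convex_hull[OF A(1) A'(1) finite_element[OF V(1)] V(2)])
         (metis A(2) A'(2) fg element_subset_nodes[OF V(1)] hull_inc subsetD)
    then show ?thesis using A(2) A'(2) V(2) by simp
  qed (simp add: S1D(3)[OF f] S1D(3)[OF g])
qed

lemma hat_eq_glued_hat: "hat \<Omega> Tv z = glued_hat z"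
  unfolding hat_def
  by (rule the_equality) (auto simp: glued_hat_S1 glued_hat_node intro: S1_nodal_eqI[OF _ glued_hat_S1])

lemma hat_S1: "hat \<Omega> Tv z \<in> S1 \<Omega> Tv"
  by (simp add: hat_eq_glued_hat glued_hat_S1)

lemma hat_node: "z' \<in> N \<Longrightarrow> hat \<Omega> Tv z z' = (if z' = z then 1 else 0)"
  by (simp add: hat_eq_glued_hat glued_hat_node)

lemma hat_nonneg: "0 \<le> hat \<Omega> Tv z x"
proof (cases "x \<in> closure \<Omega>")
  case True
  then obtain V where V: "V \<in> Tv" "x \<in> convex hull V" using closure_covered by blast
  obtain A b where A: "linear A" "local_hat V z = (\<lambda>x. A x + b)" using local_hat(1)[OF V(1)] by blast
  have "0 \<le> A x + b"
    by (rule affine_fun_nonneg_on_convex_hull[OF A(1) finite_element[OF V(1)] V(2)])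
       (use local_hat(2)[OF V(1)] A(2) in \<open>metis order.refl zero_less_one_class.zero_le_one\<close>)
  then show ?thesis using glued_hat_on_element[OF V] A(2) by (simp add: hat_eq_glued_hat)
qed (simp add: hat_eq_glued_hat glued_hat_def)

lemma interp_S1: "interp \<Omega> Tv g \<in> S1 \<Omega> Tv"
  unfolding interp_def by (intro S1_sum finite_nodes S1_scaleR_const hat_S1)

lemma interp_node: "z \<in> N \<Longrightarrow> interp \<Omega> Tv g z = g z"
proof -
  assume z: "z \<in> N"
  have "interp \<Omega> Tv g z = (\<Sum>z'\<in>N. if z = z' then g z' else 0)"
    unfolding interp_def using z by (intro sum.cong) (auto simp: hat_node)
  also have "\<dots> = g z" using z finite_nodes by simp
  finally show ?thesis .
qed

lemma interp_S1_eq: "f \<in> S1 \<Omega> Tv \<Longrightarrow> interp \<Omega> Tv f = f"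
  by (rule S1_nodal_eqI[OF interp_S1]) (auto simp: interp_node)

lemma hat_integrable: "hat \<Omega> Tv z integrable_on \<Omega>"
  using bounded_domain open_domain S1D(1)[OF hat_S1]
  by (intro integrable_on_continuous_closure lmeasurable_open)

section \<open>Mass lumping\<close>

definition lumped_weight :: "real^'d \<Rightarrow> real" where
  "lumped_weight z = integral \<Omega> (hat \<Omega> Tv z)"

lemma lumped_weight_pos:
  assumes z: "z \<in> N"
  shows "0 < lumped_weight z"
proof -
  have cont: "continuous_on (closure \<Omega>) (hat \<Omega> Tv z)" by (rule S1D(1)[OF hat_S1])
  have "z \<in> closure \<Omega>" by (rule node_in_closure[OF z])
  then obtain d where d: "0 < d" "\<And>x. x \<in> closure \<Omega> \<Longrightarrow> dist x z < d \<Longrightarrow> dist (hat \<Omega> Tv z x) 1 < 1"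
    using cont hat_node[OF z, of z] unfolding continuous_on_iff by (metis zero_less_one)
  obtain x0 where x0: "x0 \<in> \<Omega>" "dist x0 z < d"
    using \<open>z \<in> closure \<Omega>\<close> d(1) unfolding closure_approachable by blast
  have "0 < hat \<Omega> Tv z x0"
    using d(2)[OF closure_subset[THEN subsetD, OF x0(1)] x0(2)] by (simp add: dist_real_def)
  then show ?thesis
    unfolding lumped_weight_def
    using open_domain hat_integrable continuous_on_subset[OF cont closure_subset] hat_nonneg x0(1)
    by (intro integral_pos_continuous) auto
qed

lemma lprod_nodal: "lprod \<Omega> Tv f g = (\<Sum>z\<in>N. lumped_weight z * (f z \<bullet> g z))"
  unfolding lprod_def interp_def lumped_weight_def
  by (subst integral_sum[OF finite_nodes])
     (auto simp: integrable_on_mult_left hat_integrable mult.commute)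

lemma lprod_commute: "lprod \<Omega> Tv f g = lprod \<Omega> Tv g f"
  unfolding lprod_nodal by (simp add: inner_commute)

lemma lprod_add_left: "lprod \<Omega> Tv (\<lambda>x. f x + g x) h = lprod \<Omega> Tv f h + lprod \<Omega> Tv g h"
  unfolding lprod_nodal by (simp add: inner_add_left distrib_left sum.distrib)

lemma lprod_diff_left: "lprod \<Omega> Tv (\<lambda>x. f x - g x) h = lprod \<Omega> Tv f h - lprod \<Omega> Tv g h"
  unfolding lprod_nodal by (simp add: inner_diff_left right_diff_distrib sum_subtractf)

lemma lprod_scaleR_left: "lprod \<Omega> Tv (\<lambda>x. c *\<^sub>R f x) h = c * lprod \<Omega> Tv f h"
  unfolding lprod_nodal by (simp add: sum_distrib_left mult_ac)

lemma lprod_add_right: "lprod \<Omega> Tv h (\<lambda>x. f x + g x) = lprod \<Omega> Tv h f + lprod \<Omega> Tv h g"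
  using lprod_add_left lprod_commute by metis

lemma lprod_diff_right: "lprod \<Omega> Tv h (\<lambda>x. f x - g x) = lprod \<Omega> Tv h f - lprod \<Omega> Tv h g"
  using lprod_diff_left lprod_commute by metis

lemma lprod_scaleR_right: "lprod \<Omega> Tv h (\<lambda>x. c *\<^sub>R f x) = c * lprod \<Omega> Tv h f"
  using lprod_scaleR_left lprod_commute by metis

lemma lprod_zero_left: "lprod \<Omega> Tv (\<lambda>x. 0) h = 0"
  unfolding lprod_nodal by simp

lemma lprod_fcross_commute: "lprod \<Omega> Tv (fcross a b) c = - lprod \<Omega> Tv (fcross a c) b"
proof -
  have triple: "cross3 u v \<bullet> w = - (cross3 u w \<bullet> v)" for u v w :: "real^3"
    by (simp add: cross3_simps)
  show ?thesis
    unfolding lprod_nodal fcross_def sum_negf[symmetric] by (rule sum.cong[OF refl]) (subst triple, simp)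
qed

lemma lprod_fcross_self: "lprod \<Omega> Tv (fcross a b) b = 0"
  unfolding lprod_nodal fcross_def by (simp add: dot_cross_self)

lemma power2_hnorm: "(hnorm \<Omega> Tv f)\<^sup>2 = lprod \<Omega> Tv f f"
proof -
  have "0 \<le> lprod \<Omega> Tv f f"
    unfolding lprod_nodal using lumped_weight_pos by (intro sum_nonneg) (simp add: less_imp_le)
  then show ?thesis unfolding hnorm_def by simp
qed

lemma S1_lprod_eqI:
  assumes p: "p \<in> S1 \<Omega> Tv" and q: "q \<in> S1 \<Omega> Tv" and pq: "\<And>\<phi>. \<phi> \<in> S1 \<Omega> Tv \<Longrightarrow> lprod \<Omega> Tv p \<phi> = lprod \<Omega> Tv q \<phi>"
  shows "p = q"
proof (rule S1_nodal_eqI[OF p q])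
  define d where "d x = p x - q x" for x
  have "(\<Sum>z\<in>N. lumped_weight z * (d z \<bullet> d z)) = 0"
    using pq[OF S1_diff[OF p q]] unfolding d_def lprod_nodal[symmetric] lprod_diff_left by simp
  moreover have "0 \<le> lumped_weight z * (d z \<bullet> d z)" if "z \<in> N" for z
    using lumped_weight_pos[OF that] by simp
  ultimately have "\<forall>z\<in>N. lumped_weight z * (d z \<bullet> d z) = 0"
    using sum_nonneg_eq_0_iff[OF finite_nodes, of "\<lambda>z. lumped_weight z * (d z \<bullet> d z)"] by blast
  then have "d z = 0" if "z \<in> N" for z
    using lumped_weight_pos[OF that] that by force
  then show "p z = q z" if "z \<in> N" for z
    using that by (simp add: d_def)
qed

section \<open>Gradients and the stiffness matrix\<close>

lemma S1_has_derivative_on_element: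
  fixes f :: "real^'d \<Rightarrow> 'b::real_normed_vector"
  assumes f: "f \<in> S1 \<Omega> Tv" and V: "V \<in> Tv"
  obtains A where "linear A" "\<And>x. x \<in> interior (convex hull V) \<Longrightarrow> (f has_derivative A) (at x)"
proof -
  obtain A b where A: "linear A" "\<forall>x\<in>convex hull V. f x = A x + b" using S1D(2)[OF f V] by blast
  have "(f has_derivative A) (at x)" if x: "x \<in> interior (convex hull V)" for x
  proof (rule has_derivative_transform_within_open[OF _ open_interior x])
    show "((\<lambda>y. A y + b) has_derivative A) (at x)"
      using A(1) by (intro has_derivative_add_const bounded_linear_imp_has_derivative)
        (simp add: linear_conv_bounded_linear)
  qed (metis A(2) interior_subset subsetD)
  then show ?thesis using that A(1) by blast
qed

lemma S1_frechet_derivative_const: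
  fixes f :: "real^'d \<Rightarrow> 'b::real_normed_vector"
  assumes "f \<in> S1 \<Omega> Tv" "V \<in> Tv" "x \<in> interior (convex hull V)" "y \<in> interior (convex hull V)"
  shows "frechet_derivative f (at x) = frechet_derivative f (at y)"
  using S1_has_derivative_on_element[OF assms(1,2)] assms(3,4) frechet_derivative_at by metis

lemma S1_frechet_derivative_nodal:
  fixes f :: "real^'d \<Rightarrow> 'b::real_normed_vector"
  assumes f: "f \<in> S1 \<Omega> Tv" and V: "V \<in> Tv" and x: "x \<in> interior (convex hull V)"
  shows "frechet_derivative f (at x) = (\<lambda>h. \<Sum>z\<in>N. frechet_derivative (hat \<Omega> Tv z) (at x) h *\<^sub>R f z)"
proof -
  have "(hat \<Omega> Tv z has_derivative frechet_derivative (hat \<Omega> Tv z) (at x)) (at x)" for z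
    using S1_has_derivative_on_element[OF hat_S1 V] x frechet_derivative_at by metis
  then have "((\<lambda>y. \<Sum>z\<in>N. hat \<Omega> Tv z y *\<^sub>R f z) has_derivative
         (\<lambda>h. \<Sum>z\<in>N. frechet_derivative (hat \<Omega> Tv z) (at x) h *\<^sub>R f z)) (at x)"
    by (intro has_derivative_sum has_derivative_scaleR_left)
  moreover have "(\<lambda>y. \<Sum>z\<in>N. hat \<Omega> Tv z y *\<^sub>R f z) = f"
    using interp_S1_eq[OF f] unfolding interp_def .
  ultimately have "(f has_derivative (\<lambda>h. \<Sum>z\<in>N. frechet_derivative (hat \<Omega> Tv z) (at x) h *\<^sub>R f z)) (at x)"
    by simp
  then show ?thesis by (rule frechet_derivative_at[symmetric])
qed

lemma element_interiors_disjoint: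
  assumes V: "V \<in> Tv" and W: "W \<in> Tv"
    and x: "x \<in> interior (convex hull V)" "x \<in> interior (convex hull W)"
  shows "V = W"
proof (rule ccontr)
  assume "V \<noteq> W"
  have "\<not> V \<subseteq> W"
  proof
    assume "V \<subseteq> W"
    then show False
      using card_subset_eq[OF finite_element[OF W] \<open>V \<subseteq> W\<close>] card_element[OF V] card_element[OF W] \<open>V \<noteq> W\<close>
      by simp
  qed
  then have "card (V \<inter> W) < card V"
    by (intro psubset_card_mono finite_element[OF V]) blast
  then have "card (V \<inter> W) \<le> DIM(real^'d)" using card_element[OF V] by simp
  then have "interior (convex hull (V \<inter> W)) = {}"
    using finite_element[OF V] by (intro empty_interior_convex_hull) auto
  moreover have "interior (convex hull V) \<inter> interior (convex hull W) \<subseteq> interior (convex hull (V \<inter> W))"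
    using mesh_conforming[OF V W] interior_subset by (intro interior_maximal) auto
  ultimately show False using x by blast
qed

definition mesh_skeleton :: "(real^'d) set" where
  "mesh_skeleton = (\<Union>V\<in>Tv. frontier (convex hull V))"

lemma negligible_mesh_skeleton: "negligible mesh_skeleton"
  unfolding mesh_skeleton_def
  by (rule negligible_Union) (auto simp: finite_mesh intro: negligible_convex_frontier)

lemma in_element_interior:
  assumes "x \<in> closure \<Omega>" "x \<notin> mesh_skeleton"
  obtains V where "V \<in> Tv" "x \<in> interior (convex hull V)"
proof -
  obtain V where V: "V \<in> Tv" "x \<in> convex hull V" using closure_covered assms(1) by blast
  then have "x \<in> interior (convex hull V)"
    using assms(2) closed_element[OF V(1)] unfolding mesh_skeleton_def frontier_def by auto
  then show ?thesis using V(1) that by blast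
qed

lemma integrable_piecewise_constant:
  fixes F :: "real^'d \<Rightarrow> real"
  assumes const: "\<And>V x y. V \<in> Tv \<Longrightarrow> x \<in> interior (convex hull V) \<Longrightarrow> y \<in> interior (convex hull V) \<Longrightarrow> F x = F y"
  shows "F integrable_on \<Omega>"
proof -
  define c where "c V = F (SOME x. x \<in> interior (convex hull V))" for V
  have F_eq_c: "F x = c V" if "V \<in> Tv" "x \<in> interior (convex hull V)" for V x
    unfolding c_def by (rule const[OF that]) (rule someI[of _ x], fact)
  define G where "G x = (\<Sum>V\<in>Tv. if x \<in> interior (convex hull V) then c V else 0)" for x
  have "G integrable_on \<Omega>"
    unfolding G_def
  proof (rule integrable_sum[OF finite_mesh])
    fix V
    have "(\<lambda>x. c V) integrable_on (interior (convex hull V) \<inter> \<Omega>)"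
      using bounded_domain open_domain by (intro integrable_on_const lmeasurable_open) auto
    then show "(\<lambda>x. if x \<in> interior (convex hull V) then c V else 0) integrable_on \<Omega>"
      by (simp add: integrable_restrict_Int)
  qed
  then show ?thesis
  proof (rule integrable_spike[OF _ negligible_mesh_skeleton])
    fix x assume x: "x \<in> \<Omega> - mesh_skeleton"
    then obtain V where V: "V \<in> Tv" "x \<in> interior (convex hull V)"
      using in_element_interior closure_subset by blast
    have "G x = (\<Sum>W\<in>Tv. if W = V then c V else 0)"
      unfolding G_def by (rule sum.cong) (use element_interiors_disjoint V in auto)
    then show "F x = G x" using F_eq_c[OF V] V(1) finite_mesh by simp
  qed
qed

abbreviation stiffness :: "real^'d \<Rightarrow> real^'d \<Rightarrow> real" where
  "stiffness z z' \<equiv> dprod \<Omega> (hat \<Omega> Tv z) (hat \<Omega> Tv z')"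

lemma gradient_inner_nodal:
  fixes f g :: "real^'d \<Rightarrow> 'b::real_inner"
  assumes f: "f \<in> S1 \<Omega> Tv" and g: "g \<in> S1 \<Omega> Tv" and V: "V \<in> Tv" "x \<in> interior (convex hull V)"
  defines "D z \<equiv> frechet_derivative (hat \<Omega> Tv z) (at x)"
  shows "(\<Sum>j\<in>Basis. frechet_derivative f (at x) j \<bullet> frechet_derivative g (at x) j)
       = (\<Sum>z\<in>N. \<Sum>z'\<in>N. (f z \<bullet> g z') * (\<Sum>j\<in>Basis. D z j * D z' j))"
proof -
  have "(\<Sum>j\<in>Basis. frechet_derivative f (at x) j \<bullet> frechet_derivative g (at x) j)
      = (\<Sum>j\<in>Basis. \<Sum>z'\<in>N. \<Sum>z\<in>N. (f z \<bullet> g z') * (D z j * D z' j))"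
    unfolding S1_frechet_derivative_nodal[OF f V] S1_frechet_derivative_nodal[OF g V] D_def
    by (simp add: inner_sum_left inner_sum_right sum_distrib_left mult_ac)
  also have "\<dots> = (\<Sum>z'\<in>N. \<Sum>j\<in>Basis. \<Sum>z\<in>N. (f z \<bullet> g z') * (D z j * D z' j))"
    by (rule sum.swap)
  also have "\<dots> = (\<Sum>z'\<in>N. \<Sum>z\<in>N. \<Sum>j\<in>Basis. (f z \<bullet> g z') * (D z j * D z' j))"
    by (rule sum.cong[OF refl sum.swap])
  also have "\<dots> = (\<Sum>z\<in>N. \<Sum>z'\<in>N. \<Sum>j\<in>Basis. (f z \<bullet> g z') * (D z j * D z' j))"
    by (rule sum.swap)
  also have "\<dots> = (\<Sum>z\<in>N. \<Sum>z'\<in>N. (f z \<bullet> g z') * (\<Sum>j\<in>Basis. D z j * D z' j))"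
    by (simp add: sum_distrib_left)
  finally show ?thesis .
qed

lemma dprod_nodal:
  fixes f g :: "real^'d \<Rightarrow> 'b::real_inner"
  assumes f: "f \<in> S1 \<Omega> Tv" and g: "g \<in> S1 \<Omega> Tv"
  shows "dprod \<Omega> f g = (\<Sum>z\<in>N. \<Sum>z'\<in>N. (f z \<bullet> g z') * stiffness z z')"
proof -
  define H where "H z z' x = (\<Sum>j\<in>Basis. frechet_derivative (hat \<Omega> Tv z) (at x) j *
                                          frechet_derivative (hat \<Omega> Tv z') (at x) j)" for z z' x
  have H: "H z z' integrable_on \<Omega>" for z z'
  proof (rule integrable_piecewise_constant)
    fix V x y assume "V \<in> Tv" "x \<in> interior (convex hull V)" "y \<in> interior (convex hull V)"
    then show "H z z' x = H z z' y"
      unfolding H_def by (simp add: S1_frechet_derivative_const[OF hat_S1, of V x y])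
  qed
  have "dprod \<Omega> f g = integral \<Omega> (\<lambda>x. \<Sum>z\<in>N. \<Sum>z'\<in>N. (f z \<bullet> g z') * H z z' x)"
    unfolding dprod_def
  proof (rule integral_spike[OF negligible_mesh_skeleton])
    fix x assume "x \<in> \<Omega> - mesh_skeleton"
    then obtain V where "V \<in> Tv" "x \<in> interior (convex hull V)"
      using in_element_interior closure_subset by blast
    then show "(\<Sum>z\<in>N. \<Sum>z'\<in>N. (f z \<bullet> g z') * H z z' x) =
        (\<Sum>j\<in>Basis. frechet_derivative f (at x) j \<bullet> frechet_derivative g (at x) j)"
      unfolding H_def by (simp add: gradient_inner_nodal[OF f g])
  qed
  also have "\<dots> = (\<Sum>z\<in>N. \<Sum>z'\<in>N. (f z \<bullet> g z') * integral \<Omega> (H z z'))"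
    using H by (simp add: integral_sum finite_nodes integrable_sum integrable_on_mult_right)
  also have "\<dots> = (\<Sum>z\<in>N. \<Sum>z'\<in>N. (f z \<bullet> g z') * stiffness z z')"
    by (simp add: dprod_def H_def[abs_def])
  finally show ?thesis .
qed

lemma dprod_commute: "dprod \<Omega> f g = dprod \<Omega> g f"
  unfolding dprod_def by (simp add: inner_commute)

lemma dprod_add_left:
  fixes f g h :: "real^'d \<Rightarrow> 'b::real_inner"
  assumes "f \<in> S1 \<Omega> Tv" "g \<in> S1 \<Omega> Tv" "h \<in> S1 \<Omega> Tv"
  shows "dprod \<Omega> (\<lambda>x. f x + g x) h = dprod \<Omega> f h + dprod \<Omega> g h"
  unfolding dprod_nodal[OF S1_add[OF assms(1,2)] assms(3)] dprod_nodal[OF assms(1,3)] dprod_nodal[OF assms(2,3)]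
  by (simp add: inner_add_left distrib_right sum.distrib)

lemma dprod_diff_left:
  fixes f g h :: "real^'d \<Rightarrow> 'b::real_inner"
  assumes "f \<in> S1 \<Omega> Tv" "g \<in> S1 \<Omega> Tv" "h \<in> S1 \<Omega> Tv"
  shows "dprod \<Omega> (\<lambda>x. f x - g x) h = dprod \<Omega> f h - dprod \<Omega> g h"
  unfolding dprod_nodal[OF S1_diff[OF assms(1,2)] assms(3)] dprod_nodal[OF assms(1,3)] dprod_nodal[OF assms(2,3)]
  by (simp add: inner_diff_left left_diff_distrib sum_subtractf)

lemma dprod_scaleR_left:
  fixes f h :: "real^'d \<Rightarrow> 'b::real_inner"
  assumes "f \<in> S1 \<Omega> Tv" "h \<in> S1 \<Omega> Tv"
  shows "dprod \<Omega> (\<lambda>x. c *\<^sub>R f x) h = c * dprod \<Omega> f h"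
  unfolding dprod_nodal[OF S1_scaleR[OF assms(1)] assms(2)] dprod_nodal[OF assms(1,2)]
  by (simp add: sum_distrib_left mult_ac)

lemma dprod_add_right:
  fixes f g h :: "real^'d \<Rightarrow> 'b::real_inner"
  assumes "f \<in> S1 \<Omega> Tv" "g \<in> S1 \<Omega> Tv" "h \<in> S1 \<Omega> Tv"
  shows "dprod \<Omega> h (\<lambda>x. f x + g x) = dprod \<Omega> h f + dprod \<Omega> h g"
  using dprod_add_left[OF assms] dprod_commute by metis

lemma dprod_diff_right:
  fixes f g h :: "real^'d \<Rightarrow> 'b::real_inner"
  assumes "f \<in> S1 \<Omega> Tv" "g \<in> S1 \<Omega> Tv" "h \<in> S1 \<Omega> Tv"
  shows "dprod \<Omega> h (\<lambda>x. f x - g x) = dprod \<Omega> h f - dprod \<Omega> h g"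
  using dprod_diff_left[OF assms] dprod_commute by metis

lemma dprod_scaleR_right:
  fixes f h :: "real^'d \<Rightarrow> 'b::real_inner"
  assumes "f \<in> S1 \<Omega> Tv" "h \<in> S1 \<Omega> Tv"
  shows "dprod \<Omega> h (\<lambda>x. c *\<^sub>R f x) = c * dprod \<Omega> h f"
  using dprod_scaleR_left[OF assms] dprod_commute by metis

lemma Ph_heff:
  fixes m :: "real^'d \<Rightarrow> real^3"
  assumes m: "m \<in> S1 \<Omega> Tv"
  shows "Ph_heff \<Omega> Tv m \<in> S1 \<Omega> Tv"
    and "\<And>\<phi>. \<phi> \<in> S1 \<Omega> Tv \<Longrightarrow> lprod \<Omega> Tv (Ph_heff \<Omega> Tv m) \<phi> = - dprod \<Omega> m \<phi>"
proof -
  let ?P = "\<lambda>p. p \<in> S1 \<Omega> Tv \<and> (\<forall>\<phi>\<in>S1 \<Omega> Tv. lprod \<Omega> Tv p \<phi> = - dprod \<Omega> m \<phi>)"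
  txt \<open>The lumped mass matrix is diagonal, so the defining equation is solved node by node.\<close>
  define p where "p = interp \<Omega> Tv (\<lambda>z'. (- 1 / lumped_weight z') *\<^sub>R (\<Sum>z\<in>N. stiffness z z' *\<^sub>R m z))"
  have "lprod \<Omega> Tv p \<phi> = - dprod \<Omega> m \<phi>" if \<phi>: "\<phi> \<in> S1 \<Omega> Tv" for \<phi>
  proof -
    have "lprod \<Omega> Tv p \<phi> = (\<Sum>z'\<in>N. - ((\<Sum>z\<in>N. stiffness z z' *\<^sub>R m z) \<bullet> \<phi> z'))"
      unfolding lprod_nodal p_def
      by (rule sum.cong[OF refl]) (simp add: interp_node less_imp_neq[OF lumped_weight_pos, symmetric])
    also have "\<dots> = - dprod \<Omega> m \<phi>"
      unfolding dprod_nodal[OF m \<phi>]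
      by (subst sum.swap) (simp add: inner_sum_left sum_negf mult.commute)
    finally show ?thesis .
  qed
  then have "?P p" unfolding p_def using interp_S1 by blast
  moreover have "q = p" if "?P q" for q
    using that \<open>?P p\<close> by (intro S1_lprod_eqI) auto
  ultimately have "?P (Ph_heff \<Omega> Tv m)"
    unfolding Ph_heff_def by (rule theI)
  then show "Ph_heff \<Omega> Tv m \<in> S1 \<Omega> Tv"
    and "\<And>\<phi>. \<phi> \<in> S1 \<Omega> Tv \<Longrightarrow> lprod \<Omega> Tv (Ph_heff \<Omega> Tv m) \<phi> = - dprod \<Omega> m \<phi>"
    by auto
qed

lemma indicator_closure_S1: "(indicator (closure \<Omega>) :: real^'d \<Rightarrow> real) \<in> S1 \<Omega> Tv"
proof (rule S1I)
  show "continuous_on (closure \<Omega>) (indicator (closure \<Omega>) :: real^'d \<Rightarrow> real)"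
    by (rule continuous_on_eq[OF continuous_on_const]) simp
  fix V assume "V \<in> Tv"
  then show "\<exists>A b. linear A \<and> (\<forall>x\<in>convex hull V. (indicator (closure \<Omega>) x :: real) = A x + b)"
    using element_subset_closure by (intro exI[of _ "\<lambda>x. 0"] exI[of _ 1]) (auto intro: linear_zero simp: indicator_def)
qed simp

text \<open>Testing against the constant function, whose gradient vanishes.\<close>
lemma stiffness_row_sum: "z \<in> N \<Longrightarrow> (\<Sum>z'\<in>N. stiffness z z') = 0"
proof -
  assume z: "z \<in> N"
  let ?one = "indicator (closure \<Omega>) :: real^'d \<Rightarrow> real"
  have "frechet_derivative ?one (at x) = (\<lambda>h. 0)" if "x \<in> \<Omega>" for x
  proof (rule frechet_derivative_at[symmetric])
    show "(?one has_derivative (\<lambda>h. 0)) (at x)"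
      by (rule has_derivative_transform_within_open[OF has_derivative_const open_domain that])
         (simp add: closure_subset[THEN subsetD])
  qed
  then have "dprod \<Omega> (hat \<Omega> Tv z) ?one = 0"
    unfolding dprod_def by (simp cong: integral_cong)
  moreover have "dprod \<Omega> (hat \<Omega> Tv z) ?one = (\<Sum>z1\<in>N. if z1 = z then (\<Sum>z'\<in>N. stiffness z1 z') else 0)"
    unfolding dprod_nodal[OF hat_S1 indicator_closure_S1]
    by (rule sum.cong[OF refl]) (simp add: hat_node node_in_closure)
  ultimately show ?thesis using z finite_nodes by simp
qed

lemma dprod_self_nodal_differences:
  fixes f :: "real^'d \<Rightarrow> 'b::real_inner"
  assumes f: "f \<in> S1 \<Omega> Tv"
  shows "dprod \<Omega> f f = - (1/2) * (\<Sum>z\<in>N. \<Sum>z'\<in>N. stiffness z z' * (norm (f z - f z'))\<^sup>2)"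
proof -
  have row: "(\<Sum>z\<in>N. \<Sum>z'\<in>N. stiffness z z' * (f z \<bullet> f z)) = 0"
    by (simp add: sum_distrib_right[symmetric] stiffness_row_sum)
  have "(\<Sum>z\<in>N. \<Sum>z'\<in>N. stiffness z z' * (f z' \<bullet> f z')) = (\<Sum>z'\<in>N. \<Sum>z\<in>N. stiffness z' z * (f z' \<bullet> f z'))"
    by (subst sum.swap) (simp add: dprod_commute)
  also have "\<dots> = 0"
    by (simp add: sum_distrib_right[symmetric] stiffness_row_sum)
  finally have column: "(\<Sum>z\<in>N. \<Sum>z'\<in>N. stiffness z z' * (f z' \<bullet> f z')) = 0" .
  have "stiffness z z' * (norm (f z - f z'))\<^sup>2
      = stiffness z z' * (f z \<bullet> f z) + stiffness z z' * (f z' \<bullet> f z') - 2 * ((f z \<bullet> f z') * stiffness z z')" for z z'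
    by (simp add: power2_norm_eq_inner inner_diff_left inner_diff_right inner_commute[of "f z'" "f z"] algebra_simps)
  then have "(\<Sum>z\<in>N. \<Sum>z'\<in>N. stiffness z z' * (norm (f z - f z'))\<^sup>2)
      = (\<Sum>z\<in>N. \<Sum>z'\<in>N. stiffness z z' * (f z \<bullet> f z)) + (\<Sum>z\<in>N. \<Sum>z'\<in>N. stiffness z z' * (f z' \<bullet> f z'))
        - 2 * dprod \<Omega> f f"
    unfolding dprod_nodal[OF f f] by (simp add: sum.distrib sum_subtractf sum_distrib_left)
  then show ?thesis unfolding row column by simp
qed

lemma dprod_le_if_nodal_contraction:
  fixes f g :: "real^'d \<Rightarrow> 'b::real_inner"
  assumes f: "f \<in> S1 \<Omega> Tv" and g: "g \<in> S1 \<Omega> Tv"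
    and angle: "\<forall>z\<in>N. \<forall>z'\<in>N. z \<noteq> z' \<longrightarrow> stiffness z z' \<le> 0"
    and contraction: "\<And>z z'. z \<in> N \<Longrightarrow> z' \<in> N \<Longrightarrow> norm (g z - g z') \<le> norm (f z - f z')"
  shows "dprod \<Omega> g g \<le> dprod \<Omega> f f"
proof -
  have "stiffness z z' * (norm (f z - f z'))\<^sup>2 \<le> stiffness z z' * (norm (g z - g z'))\<^sup>2"
    if "z \<in> N" "z' \<in> N" for z z'
  proof (cases "z = z'")
    case False
    then show ?thesis
      using angle that contraction[OF that] by (intro mult_left_mono_neg power_mono) auto
  qed simp
  then show ?thesis
    unfolding dprod_self_nodal_differences[OF f] dprod_self_nodal_differences[OF g]
    by (simp add: sum_mono)
qed

section \<open>Energy laws\<close>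

lemma lprod_dt_mid:
  assumes "k \<noteq> 0"
  shows "lprod \<Omega> Tv (dt k a b) (mid a b) = (lprod \<Omega> Tv a a - lprod \<Omega> Tv b b) / (2 * k)"
  unfolding dt_def mid_def lprod_scaleR_left lprod_scaleR_right lprod_diff_left lprod_add_right
  using assms lprod_commute[of a b] by (simp add: field_simps)

lemma lprod_dt_self:
  assumes "k \<noteq> 0"
  shows "lprod \<Omega> Tv (dt k a b) a
       = (lprod \<Omega> Tv a a - lprod \<Omega> Tv b b + k\<^sup>2 * (hnorm \<Omega> Tv (dt k a b))\<^sup>2) / (2 * k)"
  unfolding power2_hnorm dt_def lprod_scaleR_left lprod_scaleR_right lprod_diff_left lprod_diff_right
  using assms lprod_commute[of a b] by (simp add: field_simps power2_eq_square)

lemma dprod_mid_dt: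
  fixes a b :: "real^'d \<Rightarrow> real^3"
  assumes a: "a \<in> S1 \<Omega> Tv" and b: "b \<in> S1 \<Omega> Tv" and k: "k \<noteq> 0"
  shows "dprod \<Omega> (mid a b) (dt k a b) = (dprod \<Omega> a a - dprod \<Omega> b b) / (2 * k)"
proof -
  have ab: "(\<lambda>x. a x + b x) \<in> S1 \<Omega> Tv" "(\<lambda>x. a x - b x) \<in> S1 \<Omega> Tv"
    by (rule S1_add[OF a b], rule S1_diff[OF a b])
  have "dprod \<Omega> (mid a b) (dt k a b) = 1 / (2 * k) * dprod \<Omega> (\<lambda>x. a x + b x) (\<lambda>x. a x - b x)"
    unfolding mid_def dt_def dprod_scaleR_left[OF ab(1) S1_scaleR[OF ab(2)]] dprod_scaleR_right[OF ab(2,1)]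
    by simp
  also have "\<dots> = (dprod \<Omega> a a - dprod \<Omega> b b) / (2 * k)"
    unfolding dprod_add_left[OF a b ab(2)] dprod_diff_right[OF a b a] dprod_diff_right[OF a b b]
    using dprod_commute[of a b] by simp
  finally show ?thesis .
qed

text \<open>Shared by both angular momentum methods: \<open>R = 0\<close> for the nonlinear one, and \<open>R\<close> is the
  last increment of the inner iteration for the linearized one.\<close>
lemma midpoint_am_step_energy:
  fixes M0 M1 W0 W1 R :: "real^'d \<Rightarrow> real^3"
  assumes S1: "M0 \<in> S1 \<Omega> Tv" "M1 \<in> S1 \<Omega> Tv" "W0 \<in> S1 \<Omega> Tv" "W1 \<in> S1 \<Omega> Tv" and k: "k \<noteq> 0"
    and eq_m: "\<And>\<phi>. \<phi> \<in> S1 \<Omega> Tv \<Longrightarrow> lprod \<Omega> Tv (dt k M1 M0) \<phi>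
      = - lprod \<Omega> Tv (fcross (mid M1 M0) (mid W1 W0)) \<phi> + lprod \<Omega> Tv (fcross (mid M1 M0) R) \<phi>"
    and eq_w: "\<And>\<psi>. \<psi> \<in> S1 \<Omega> Tv \<Longrightarrow> \<tau> * lprod \<Omega> Tv (dt k W1 W0) \<psi>
      = lprod \<Omega> Tv (fcross (mid M1 M0) (Ph_heff \<Omega> Tv (mid M1 M0))) \<psi>
        - \<alpha> * lprod \<Omega> Tv (fcross (mid M1 M0) (dt k M1 M0)) \<psi>
        - lprod \<Omega> Tv (fcross (mid M1 M0) (mid W1 W0)) \<psi>"
  shows "Jh \<Omega> Tv \<tau> M1 W1 + \<alpha> * k * (hnorm \<Omega> Tv (dt k M1 M0))\<^sup>2
      + k * lprod \<Omega> Tv (fcross (mid M1 M0) R) (\<lambda>x. Ph_heff \<Omega> Tv (mid M1 M0) x - \<alpha> *\<^sub>R dt k M1 M0 x)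
    = Jh \<Omega> Tv \<tau> M0 W0"
proof -
  define Mm Wm D where "Mm = mid M1 M0" and "Wm = mid W1 W0" and "D = dt k M1 M0"
  define P where "P = Ph_heff \<Omega> Tv Mm"
  define \<Phi> where "\<Phi> = (\<lambda>x. P x - \<alpha> *\<^sub>R D x)"
  have Mm: "Mm \<in> S1 \<Omega> Tv" and Wm: "Wm \<in> S1 \<Omega> Tv" and D: "D \<in> S1 \<Omega> Tv"
    unfolding Mm_def Wm_def D_def using S1 by (auto intro: S1_mid S1_dt)
  have \<Phi>: "\<Phi> \<in> S1 \<Omega> Tv" unfolding \<Phi>_def P_def by (intro S1_diff S1_scaleR Ph_heff(1) Mm D)
  have "\<tau> * (lprod \<Omega> Tv W1 W1 - lprod \<Omega> Tv W0 W0) / (2 * k) = \<tau> * lprod \<Omega> Tv (dt k W1 W0) Wm"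
    unfolding Wm_def lprod_dt_mid[OF k] by simp
  also have "\<dots> = lprod \<Omega> Tv (fcross Mm P) Wm - \<alpha> * lprod \<Omega> Tv (fcross Mm D) Wm"
    using eq_w[OF Wm] lprod_fcross_self[of Mm Wm] by (simp add: Mm_def Wm_def D_def P_def)
  also have "\<dots> = - lprod \<Omega> Tv (fcross Mm Wm) \<Phi>"
    unfolding \<Phi>_def lprod_diff_right lprod_scaleR_right lprod_fcross_commute[of Mm _ Wm] by simp
  also have "\<dots> = lprod \<Omega> Tv D \<Phi> - lprod \<Omega> Tv (fcross Mm R) \<Phi>"
    using eq_m[OF \<Phi>] by (simp add: Mm_def Wm_def D_def)
  also have "\<dots> = - dprod \<Omega> Mm D - \<alpha> * lprod \<Omega> Tv D D - lprod \<Omega> Tv (fcross Mm R) \<Phi>"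
    unfolding \<Phi>_def lprod_diff_right lprod_scaleR_right lprod_commute[of D P]
    unfolding P_def by (simp add: Ph_heff(2)[OF Mm D])
  also have "\<dots> = (dprod \<Omega> M0 M0 - dprod \<Omega> M1 M1) / (2 * k) - \<alpha> * lprod \<Omega> Tv D D
      - lprod \<Omega> Tv (fcross Mm R) \<Phi>"
    unfolding Mm_def D_def dprod_mid_dt[OF S1(2,1) k] by (simp add: minus_divide_left)
  finally show ?thesis
    unfolding Jh_def energy_def power2_hnorm Mm_def[symmetric] D_def[symmetric] P_def[symmetric] \<Phi>_def[symmetric]
    using k by (simp add: field_simps)
qed

lemma linearized_am_step_energy:
  fixes M0 W0 U Z0 Z1 :: "real^'d \<Rightarrow> real^3"
  assumes S1: "M0 \<in> S1 \<Omega> Tv" "W0 \<in> S1 \<Omega> Tv" "U \<in> S1 \<Omega> Tv" "Z1 \<in> S1 \<Omega> Tv" and k: "k \<noteq> 0"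
    and eq_u: "\<And>\<phi>. \<phi> \<in> S1 \<Omega> Tv \<Longrightarrow>
      2 * lprod \<Omega> Tv U \<phi> + k * lprod \<Omega> Tv (fcross U Z0) \<phi> = 2 * lprod \<Omega> Tv M0 \<phi>"
    and eq_z: "\<And>\<psi>. \<psi> \<in> S1 \<Omega> Tv \<Longrightarrow>
      2 * \<tau> * lprod \<Omega> Tv Z1 \<psi> + k * lprod \<Omega> Tv (fcross U Z1) \<psi>
      = k * lprod \<Omega> Tv (fcross U (Ph_heff \<Omega> Tv U)) \<psi> + 2 * \<alpha> * lprod \<Omega> Tv (fcross U M0) \<psi>
        + 2 * \<tau> * lprod \<Omega> Tv W0 \<psi>"
    and M1: "M1 = (\<lambda>x. 2 *\<^sub>R U x - M0 x)" and W1: "W1 = (\<lambda>x. 2 *\<^sub>R Z1 x - W0 x)"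
  shows "Jh \<Omega> Tv \<tau> M1 W1 + \<alpha> * k * (hnorm \<Omega> Tv (dt k M1 M0))\<^sup>2
      + k * lprod \<Omega> Tv (fcross (mid M1 M0) (\<lambda>x. Z1 x - Z0 x))
              (\<lambda>x. Ph_heff \<Omega> Tv (mid M1 M0) x - \<alpha> *\<^sub>R dt k M1 M0 x)
    = Jh \<Omega> Tv \<tau> M0 W0"
proof (rule midpoint_am_step_energy[OF S1(1) _ S1(2) _ k])
  show "M1 \<in> S1 \<Omega> Tv" "W1 \<in> S1 \<Omega> Tv" unfolding M1 W1 using S1 by (auto intro: S1_diff S1_scaleR)
  have mid_m: "mid M1 M0 = U" and mid_w: "mid W1 W0 = Z1"
    unfolding M1 W1 mid_def by (auto simp: algebra_simps)
  have dt_m: "dt k M1 M0 = (\<lambda>x. (2 / k) *\<^sub>R (U x - M0 x))"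
    and dt_w: "dt k W1 W0 = (\<lambda>x. (2 / k) *\<^sub>R (Z1 x - W0 x))"
    unfolding M1 W1 dt_def by (simp_all add: fun_eq_iff vec_eq_iff field_simps)
  have U_M0: "fcross U M0 = (\<lambda>x. (- k / 2) *\<^sub>R fcross U (dt k M1 M0) x)"
    unfolding dt_m fcross_def using k by (auto simp: Cross3.right_diff_distrib cross_mult_right)
  have cross_m: "lprod \<Omega> Tv (fcross U M0) \<psi> = - k / 2 * lprod \<Omega> Tv (fcross U (dt k M1 M0)) \<psi>" for \<psi>
    unfolding U_M0 lprod_scaleR_left ..
  fix \<phi> :: "real^'d \<Rightarrow> real^3" assume \<phi>: "\<phi> \<in> S1 \<Omega> Tv"
  have "fcross U Z0 = (\<lambda>x. fcross U Z1 x - fcross U (\<lambda>x. Z1 x - Z0 x) x)"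
    unfolding fcross_def by (simp add: Cross3.right_diff_distrib)
  then have cross_z: "lprod \<Omega> Tv (fcross U Z0) \<phi>
      = lprod \<Omega> Tv (fcross U Z1) \<phi> - lprod \<Omega> Tv (fcross U (\<lambda>x. Z1 x - Z0 x)) \<phi>"
    by (simp add: lprod_diff_left)
  have "lprod \<Omega> Tv (dt k M1 M0) \<phi> = 2 / k * (lprod \<Omega> Tv U \<phi> - lprod \<Omega> Tv M0 \<phi>)"
    unfolding dt_m lprod_scaleR_left lprod_diff_left ..
  also have "\<dots> = - lprod \<Omega> Tv (fcross U Z0) \<phi>"
    using eq_u[OF \<phi>] k by (simp add: field_simps)
  finally show "lprod \<Omega> Tv (dt k M1 M0) \<phi> = - lprod \<Omega> Tv (fcross (mid M1 M0) (mid W1 W0)) \<phi>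
      + lprod \<Omega> Tv (fcross (mid M1 M0) (\<lambda>x. Z1 x - Z0 x)) \<phi>"
    unfolding mid_m mid_w cross_z by simp
  show "\<tau> * lprod \<Omega> Tv (dt k W1 W0) \<phi>
      = lprod \<Omega> Tv (fcross (mid M1 M0) (Ph_heff \<Omega> Tv (mid M1 M0))) \<phi>
        - \<alpha> * lprod \<Omega> Tv (fcross (mid M1 M0) (dt k M1 M0)) \<phi>
        - lprod \<Omega> Tv (fcross (mid M1 M0) (mid W1 W0)) \<phi>"
    using eq_z[OF \<phi>] k unfolding mid_m mid_w dt_w lprod_scaleR_left lprod_diff_left cross_m
    by (simp add: field_simps)
qed

lemma dprod_interp_normalize_le:
  fixes U :: "real^'d \<Rightarrow> real^3"
  assumes angle: "\<forall>z\<in>N. \<forall>z'\<in>N. z \<noteq> z' \<longrightarrow> stiffness z z' \<le> 0"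
    and U: "U \<in> S1 \<Omega> Tv" and norm_U: "\<And>z. z \<in> N \<Longrightarrow> 1 \<le> norm (U z)"
  defines "M \<equiv> interp \<Omega> Tv (\<lambda>x. (1 / norm (U x)) *\<^sub>R U x)"
  shows "dprod \<Omega> M M \<le> dprod \<Omega> U U"
  unfolding M_def
  by (rule dprod_le_if_nodal_contraction[OF U interp_S1 angle])
     (simp add: interp_node norm_diff_normalize_le norm_U)

lemma normalized_tangent_update_Mh:
  assumes M0: "M0 \<in> Mh \<Omega> Tv" and V1: "V1 \<in> Kh \<Omega> Tv M0"
  shows "interp \<Omega> Tv (\<lambda>x. (1 / norm (M0 x + k *\<^sub>R V1 x)) *\<^sub>R (M0 x + k *\<^sub>R V1 x)) \<in> Mh \<Omega> Tv"
    and "z \<in> N \<Longrightarrow> 1 \<le> norm (M0 z + k *\<^sub>R V1 z)"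
proof -
  show ge1: "1 \<le> norm (M0 z + k *\<^sub>R V1 z)" if "z \<in> N" for z
    using norm_le_norm_add_orthogonal[of "M0 z" "k *\<^sub>R V1 z"] M0 V1 that
    by (simp add: Mh_def Kh_def)
  show "interp \<Omega> Tv (\<lambda>x. (1 / norm (M0 x + k *\<^sub>R V1 x)) *\<^sub>R (M0 x + k *\<^sub>R V1 x)) \<in> Mh \<Omega> Tv"
    unfolding Mh_def using ge1 by (force simp: interp_S1 interp_node)
qed

lemma tangent_plane_step_energy:
  fixes M0 M1 V0 V1 :: "real^'d \<Rightarrow> real^3"
  assumes angle: "\<forall>z\<in>N. \<forall>z'\<in>N. z \<noteq> z' \<longrightarrow> stiffness z z' \<le> 0"
    and M0: "M0 \<in> Mh \<Omega> Tv" and V0: "V0 \<in> S1 \<Omega> Tv" and V1: "V1 \<in> Kh \<Omega> Tv M0" and k: "0 < k"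
    and eq: "\<forall>\<phi>\<in>Kh \<Omega> Tv M0.
        \<tau> * lprod \<Omega> Tv (dt k V1 V0) \<phi> + \<alpha> * lprod \<Omega> Tv V1 \<phi> + lprod \<Omega> Tv (fcross M0 V1) \<phi>
        - k * lprod \<Omega> Tv (Ph_heff \<Omega> Tv V1) \<phi> = lprod \<Omega> Tv (Ph_heff \<Omega> Tv M0) \<phi>"
    and M1: "M1 = interp \<Omega> Tv (\<lambda>x. (1 / norm (M0 x + k *\<^sub>R V1 x)) *\<^sub>R (M0 x + k *\<^sub>R V1 x))"
  shows "Jh \<Omega> Tv \<tau> M1 V1 + \<alpha> * k * (hnorm \<Omega> Tv V1)\<^sup>2 + \<tau> * k\<^sup>2 / 2 * (hnorm \<Omega> Tv (dt k V1 V0))\<^sup>2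
      + k\<^sup>2 / 2 * dprod \<Omega> V1 V1 \<le> Jh \<Omega> Tv \<tau> M0 V0"
proof -
  have SM0: "M0 \<in> S1 \<Omega> Tv" and SV1: "V1 \<in> S1 \<Omega> Tv" using M0 V1 by (simp_all add: Mh_def Kh_def)
  have SkV1: "(\<lambda>x. k *\<^sub>R V1 x) \<in> S1 \<Omega> Tv" by (rule S1_scaleR[OF SV1])
  define U where "U = (\<lambda>x. M0 x + k *\<^sub>R V1 x)"
  have SU: "U \<in> S1 \<Omega> Tv" unfolding U_def by (rule S1_add[OF SM0 SkV1])
  txt \<open>Testing with \<open>V1\<close> itself, the precession term drops out.\<close>
  have "\<tau> * lprod \<Omega> Tv (dt k V1 V0) V1 + \<alpha> * lprod \<Omega> Tv V1 V1 + k * dprod \<Omega> V1 V1 = - dprod \<Omega> M0 V1"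
    using eq[rule_format, OF V1] by (simp add: lprod_fcross_self Ph_heff(2)[OF SV1 SV1] Ph_heff(2)[OF SM0 SV1])
  then have test: "\<tau> * (lprod \<Omega> Tv V1 V1 - lprod \<Omega> Tv V0 V0 + k\<^sup>2 * (hnorm \<Omega> Tv (dt k V1 V0))\<^sup>2)
      + 2 * \<alpha> * k * lprod \<Omega> Tv V1 V1 + 2 * k\<^sup>2 * dprod \<Omega> V1 V1 = - 2 * k * dprod \<Omega> M0 V1"
    unfolding lprod_dt_self[OF less_imp_neq[OF k, symmetric]] using k
    by (simp add: field_simps power2_eq_square)
  have "dprod \<Omega> U U = dprod \<Omega> M0 M0 + 2 * k * dprod \<Omega> M0 V1 + k\<^sup>2 * dprod \<Omega> V1 V1"
    unfolding U_def dprod_add_left[OF SM0 SkV1 SU[unfolded U_def]] dprod_add_right[OF SM0 SkV1 SM0]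
      dprod_add_right[OF SM0 SkV1 SkV1] dprod_scaleR_left[OF SV1 SM0] dprod_scaleR_left[OF SV1 SkV1]
      dprod_scaleR_right[OF SV1 SM0] dprod_scaleR_right[OF SV1 SV1]
    using dprod_commute[of V1 M0] by (simp add: power2_eq_square algebra_simps)
  moreover have "dprod \<Omega> M1 M1 \<le> dprod \<Omega> U U"
  proof -
    have "M1 = interp \<Omega> Tv (\<lambda>x. (1 / norm (U x)) *\<^sub>R U x)" by (simp add: M1 U_def)
    moreover have "1 \<le> norm (U z)" if "z \<in> N" for z
      unfolding U_def by (rule normalized_tangent_update_Mh(2)[OF M0 V1 that])
    ultimately show ?thesis using dprod_interp_normalize_le[OF angle SU] by simp
  qed
  ultimately show ?thesis
    using test unfolding Jh_def energy_def power2_hnorm by (simp add: algebra_simps)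
qed

lemma tangent_plane_scheme_Mh:
  assumes "tangent_plane_scheme \<Omega> Tv \<alpha> \<tau> k n m v" "j \<le> n"
  shows "m j \<in> Mh \<Omega> Tv"
  using assms(2)
proof (induction j)
  case (Suc j)
  then have "j < n" and Mj: "m j \<in> Mh \<Omega> Tv" by simp_all
  then have "v (Suc j) \<in> Kh \<Omega> Tv (m j)"
    and "m (Suc j) = interp \<Omega> Tv (\<lambda>x. (1 / norm (m j x + k *\<^sub>R v (Suc j) x)) *\<^sub>R (m j x + k *\<^sub>R v (Suc j) x))"
    using assms(1) unfolding tangent_plane_scheme_def by blast+
  then show ?case using normalized_tangent_update_Mh(1)[OF Mj] by simp
qed (use assms(1) tangent_plane_scheme_def in blast)

lemma tangent_plane_scheme_energy_law:
  assumes angle: "\<forall>z\<in>N. \<forall>z'\<in>N. z \<noteq> z' \<longrightarrow> stiffness z z' \<le> 0"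
    and scheme: "tangent_plane_scheme \<Omega> Tv \<alpha> \<tau> k (Suc i) m v" and k: "0 < k"
  shows "Jh \<Omega> Tv \<tau> (m (Suc i)) (v (Suc i)) + \<alpha> * k * (hnorm \<Omega> Tv (v (Suc i)))\<^sup>2
      + \<tau> * k\<^sup>2 / 2 * (hnorm \<Omega> Tv (dt k (v (Suc i)) (v i)))\<^sup>2
      + k\<^sup>2 / 2 * dprod \<Omega> (v (Suc i)) (v (Suc i)) \<le> Jh \<Omega> Tv \<tau> (m i) (v i)"
proof (rule tangent_plane_step_energy[OF angle tangent_plane_scheme_Mh[OF scheme] _ _ k])
  show "v i \<in> S1 \<Omega> Tv"
    using scheme unfolding tangent_plane_scheme_def Kh_def by (cases i) auto
qed (use scheme in \<open>auto simp: tangent_plane_scheme_def\<close>)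

lemma nonlinear_am_method_energy_law:
  assumes scheme: "nonlinear_am_method \<Omega> Tv \<alpha> \<tau> k (Suc i) v0 m w" and k: "k \<noteq> 0"
  shows "Jh \<Omega> Tv \<tau> (m (Suc i)) (w (Suc i)) + \<alpha> * k * (hnorm \<Omega> Tv (dt k (m (Suc i)) (m i)))\<^sup>2
      = Jh \<Omega> Tv \<tau> (m i) (w i)"
proof -
  have S1: "m j \<in> S1 \<Omega> Tv" "w j \<in> S1 \<Omega> Tv" if "j \<le> Suc i" for j
    using scheme that unfolding nonlinear_am_method_def Mh_def Kh_def
    by (cases j; force simp: interp_S1)+
  have "fcross (mid (m (Suc i)) (m i)) (\<lambda>x. 0) = (\<lambda>x. 0)" by (simp add: fcross_def)
  then show ?thesis
    using midpoint_am_step_energy[OF S1(1)[of i] S1(1)[of "Suc i"] S1(2)[of i] S1(2)[of "Suc i"] k,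
        where R = "\<lambda>x. 0"] scheme
    by (simp add: nonlinear_am_method_def lprod_zero_left)
qed

lemma linearized_am_method_S1:
  assumes scheme: "linearized_am_method \<Omega> Tv \<alpha> \<tau> k \<epsilon> n v0 m w u z lfin" and "j \<le> n"
  shows "m j \<in> S1 \<Omega> Tv \<and> w j \<in> S1 \<Omega> Tv"
  using assms(2)
proof (induction j)
  case 0
  then show ?case using scheme by (simp add: linearized_am_method_def Mh_def interp_S1)
next
  case (Suc j)
  then have "u j (Suc (lfin j)) \<in> S1 \<Omega> Tv \<and> z j (Suc (lfin j)) \<in> S1 \<Omega> Tv
      \<and> m (Suc j) = (\<lambda>x. 2 *\<^sub>R u j (Suc (lfin j)) x - m j x)
      \<and> w (Suc j) = (\<lambda>x. 2 *\<^sub>R z j (Suc (lfin j)) x - w j x)"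
    using scheme unfolding linearized_am_method_def by auto
  then show ?case using Suc by (auto intro!: S1_diff S1_scaleR)
qed

lemma linearized_am_method_energy_law:
  assumes scheme: "linearized_am_method \<Omega> Tv \<alpha> \<tau> k \<epsilon> (Suc i) v0 m w u z lfin" and k: "k \<noteq> 0"
  shows "Jh \<Omega> Tv \<tau> (m (Suc i)) (w (Suc i)) + \<alpha> * k * (hnorm \<Omega> Tv (dt k (m (Suc i)) (m i)))\<^sup>2
      + k * lprod \<Omega> Tv (fcross (mid (m (Suc i)) (m i)) (residual z lfin i))
              (\<lambda>x. Ph_heff \<Omega> Tv (mid (m (Suc i)) (m i)) x - \<alpha> *\<^sub>R dt k (m (Suc i)) (m i) x)
    = Jh \<Omega> Tv \<tau> (m i) (w i)"
proof -
  have step: "u i 0 = m i \<and> z i 0 = w i \<and>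
        (\<forall>l\<le>lfin i. u i (Suc l) \<in> S1 \<Omega> Tv \<and>
           (\<forall>\<phi>\<in>S1 \<Omega> Tv. 2 * lprod \<Omega> Tv (u i (Suc l)) \<phi>
               + k * lprod \<Omega> Tv (fcross (u i (Suc l)) (z i l)) \<phi> = 2 * lprod \<Omega> Tv (m i) \<phi>) \<and>
           z i (Suc l) \<in> S1 \<Omega> Tv \<and>
           (\<forall>\<psi>\<in>S1 \<Omega> Tv. 2 * \<tau> * lprod \<Omega> Tv (z i (Suc l)) \<psi>
               + k * lprod \<Omega> Tv (fcross (u i (Suc l)) (z i (Suc l))) \<psi>
             = k * lprod \<Omega> Tv (fcross (u i (Suc l)) (Ph_heff \<Omega> Tv (u i (Suc l)))) \<psi>
               + 2 * \<alpha> * lprod \<Omega> Tv (fcross (u i (Suc l)) (m i)) \<psi>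
               + 2 * \<tau> * lprod \<Omega> Tv (w i) \<psi>)) \<and>
        m (Suc i) = (\<lambda>x. 2 *\<^sub>R u i (Suc (lfin i)) x - m i x) \<and>
        w (Suc i) = (\<lambda>x. 2 *\<^sub>R z i (Suc (lfin i)) x - w i x)"
    using scheme unfolding linearized_am_method_def by blast
  show ?thesis
    unfolding residual_def
    using step linearized_am_method_S1[OF scheme, of i]
    by (intro linearized_am_step_energy[OF _ _ _ _ k]) auto
qed

end


theorem proposition3p6:
  fixes \<Omega> :: "(real^'d) set" and Tv :: "(real^'d) set set"
    and \<alpha> \<tau> k \<epsilon> :: real and i :: nat
  assumes dim: "CARD('d) = 2 \<or> CARD('d) = 3"
    and dom: "lipschitz_domain \<Omega>" and poly: "polytopal \<Omega>"
    and mesh: "simplicial_mesh \<Omega> Tv"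
    and alpha: "\<alpha> > 0" and tau: "\<tau> > 0" and k: "k > 0"
  shows
   "(\<forall>(m::nat \<Rightarrow> real^'d \<Rightarrow> real^3) v.
       (\<forall>z\<in>nodes Tv. \<forall>z'\<in>nodes Tv. z \<noteq> z' \<longrightarrow> dprod \<Omega> (hat \<Omega> Tv z) (hat \<Omega> Tv z') \<le> 0) \<longrightarrow>
       tangent_plane_scheme \<Omega> Tv \<alpha> \<tau> k (Suc i) m v \<longrightarrow>
         Jh \<Omega> Tv \<tau> (m (Suc i)) (v (Suc i)) + \<alpha> * k * (hnorm \<Omega> Tv (v (Suc i)))\<^sup>2
         + \<tau> * k\<^sup>2 / 2 * (hnorm \<Omega> Tv (dt k (v (Suc i)) (v i)))\<^sup>2
         + k\<^sup>2 / 2 * dprod \<Omega> (v (Suc i)) (v (Suc i))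
         \<le> Jh \<Omega> Tv \<tau> (m i) (v i))
  \<and> (\<forall>v0 (m::nat \<Rightarrow> real^'d \<Rightarrow> real^3) w.
       nonlinear_am_method \<Omega> Tv \<alpha> \<tau> k (Suc i) v0 m w \<longrightarrow>
         Jh \<Omega> Tv \<tau> (m (Suc i)) (w (Suc i)) + \<alpha> * k * (hnorm \<Omega> Tv (dt k (m (Suc i)) (m i)))\<^sup>2
         = Jh \<Omega> Tv \<tau> (m i) (w i))
  \<and> (\<forall>v0 (m::nat \<Rightarrow> real^'d \<Rightarrow> real^3) w u z lfin.
       linearized_am_method \<Omega> Tv \<alpha> \<tau> k \<epsilon> (Suc i) v0 m w u z lfin \<longrightarrow>
         Jh \<Omega> Tv \<tau> (m (Suc i)) (w (Suc i)) + \<alpha> * k * (hnorm \<Omega> Tv (dt k (m (Suc i)) (m i)))\<^sup>2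
         + k * lprod \<Omega> Tv (fcross (mid (m (Suc i)) (m i)) (residual z lfin i))
                (\<lambda>x. Ph_heff \<Omega> Tv (mid (m (Suc i)) (m i)) x - \<alpha> *\<^sub>R dt k (m (Suc i)) (m i) x)
         = Jh \<Omega> Tv \<tau> (m i) (w i))"
proof -
  interpret fe_mesh \<Omega> Tv
    using mesh dom by unfold_locales (auto simp: lipschitz_domain_def)
  have "k \<noteq> 0" using k by simp
  then show ?thesis
    by (intro conjI allI impI tangent_plane_scheme_energy_law[OF _ _ k]
        nonlinear_am_method_energy_law linearized_am_method_energy_law)
qed

end
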